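(* Let $k\ge2$, $n\ge1$, $1\le p\le n$. If $k-1$ does not divide $n-p$ then $u_{n,p}(\mathbf e_k)=0$. If $k-1$ divides $n-p$, put $m=\frac{n-p}{k-1}$; then $$u_{n,p}(\mathbf e_k)=\frac{(n-1)!}{p!}\Big[\frac{n}{(k-1)!}\Big]^{m}\sum_{q=0}^{p}\binom{p}{q}\frac{p+(k-1)q}{(m-q)!}\Big(\frac{1-k}{kn}\Big)^q,$$ with the convention $1/(m-q)!=0$ for $q>m$.
   Context: $\mathcal K_n^{(k)}$ is the $k$-uniform complete hypergraph on vertex set $\{1,\dots,n\}$ (hyperedges: all $k$-element subsets). A cycle is a sequence $(v_0,e_1,v_1,\dots,e_\ell,v_\ell)$ with $\ell\ge2$, $v_{i-1},v_i\in e_i$, $v_0,\dots,v_{\ell-1}$ distinct, $v_\ell=v_0$, and $e_1,\dots,e_\ell$ distinct. A spanning hyperforest is a set of hyperedges with no cycle; its components are the classes of vertices connected by walks (isolated vertices included). $u_{n,p}(\mathbf e_k)$ is the number of spanning hyperforests of $\mathcal K_n^{(k)}$ with exactly $p$ components. *)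

theory Defs
  imports Complex_Main
begin

definition hyperedges :: "nat \<Rightarrow> nat \<Rightarrow> nat set set" where
  "hyperedges n k = {e. e \<subseteq> {1..n} \<and> card e = k}"

text \<open>A cycle (v0,e1,v1,...,e_l,v_l=v0), l \<ge> 2, with distinct v0..v_(l-1) and
  distinct edges; 0-based: edge es!i contains vs!i and vs!((i+1) mod l).\<close>
definition has_cycle :: "nat set set \<Rightarrow> bool" where
  "has_cycle F \<longleftrightarrow> (\<exists>vs es. length vs = length es \<and> length vs \<ge> 2 \<and>
      distinct vs \<and> distinct es \<and> set es \<subseteq> F \<and>
      (\<forall>i < length vs. vs ! i \<in> es ! i \<and> vs ! ((i + 1) mod length vs) \<in> es ! i))"

definition adj :: "nat set set \<Rightarrow> (nat \<times> nat) set" where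
  "adj F = {(x, y). \<exists>e\<in>F. x \<in> e \<and> y \<in> e}"

definition components :: "nat \<Rightarrow> nat set set \<Rightarrow> nat set set" where
  "components n F = (\<lambda>x. {y \<in> {1..n}. (x, y) \<in> (adj F)\<^sup>*}) ` {1..n}"

definition spanning_hyperforests :: "nat \<Rightarrow> nat \<Rightarrow> nat \<Rightarrow> nat set set set" where
  "spanning_hyperforests n k p =
     {F. F \<subseteq> hyperedges n k \<and> \<not> has_cycle F \<and> card (components n F) = p}"

definition u :: "nat \<Rightarrow> nat \<Rightarrow> nat \<Rightarrow> nat" where
  "u n p k = card (spanning_hyperforests n k p)"

end

theory Submission
  imports Defs "HOL-Library.FuncSet"
begin

(* A forest F of k-sets on n vertices satisfies #components + (k-1) |F| = n, so all forests
   with p components have m = (n-p)/(k-1) edges, and there are none unless k-1 divides n-p.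
   To count forests with m edges we attach markings: every component receives exactly one mark,
   either one of its vertices (a root) or one of its edges.  A root weighs 1 and a marked edge
   1-k, so the marks of a component with c = 1 + (k-1) e vertices and e edges weigh 1 in total;
   by distributivity every forest has total marking weight 1, and the number of forests equals
   the weighted number of marked forests.

   Two
   bijections removing one edge (an unmarked edge is split at its "head", a marked edge entirely)
   give recursions for the number of marked forests with j edges, r roots and q marked edges,
   solved by the closed formula marked_count.  Since this count vanishes unless
   r + q + (k-1) j = n, it also yields the component identity.  Summing the weighted counts over
   r and q finally gives the stated formula. *)

section \<open>Connectivity in a hypergraph\<close>

definition conn :: "nat set set \<Rightarrow> nat \<Rightarrow> nat \<Rightarrow> bool" where
  "conn F x y \<longleftrightarrow> (x, y) \<in> (adj F)\<^sup>*"

lemma conn_refl [simp]: "conn F x x"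
  unfolding conn_def by simp

lemma conn_sym: "conn F x y \<Longrightarrow> conn F y x"
proof -
  have "sym (adj F)" unfolding sym_def adj_def by blast
  hence "sym ((adj F)\<^sup>*)" by (rule sym_rtrancl)
  thus "conn F x y \<Longrightarrow> conn F y x" unfolding conn_def sym_def by blast
qed

lemma conn_trans: "conn F x y \<Longrightarrow> conn F y z \<Longrightarrow> conn F x z"
  unfolding conn_def by (rule rtrancl_trans)

lemma conn_edge: "e \<in> F \<Longrightarrow> x \<in> e \<Longrightarrow> y \<in> e \<Longrightarrow> conn F x y"
  unfolding conn_def adj_def by (rule r_into_rtrancl) auto

lemma conn_mono: "F \<subseteq> G \<Longrightarrow> conn F x y \<Longrightarrow> conn G x y"
  unfolding conn_def adj_def by (erule rtrancl_mono[THEN subsetD, rotated]) auto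

lemma conn_empty: "conn {} x y \<longleftrightarrow> x = y"
  unfolding conn_def adj_def by simp

lemma conn_insert:
  "conn (insert e F) x y \<longleftrightarrow> conn F x y \<or> (\<exists>a\<in>e. \<exists>b\<in>e. conn F x a \<and> conn F b y)"
proof
  assume "conn (insert e F) x y"
  thus "conn F x y \<or> (\<exists>a\<in>e. \<exists>b\<in>e. conn F x a \<and> conn F b y)"
    unfolding conn_def
  proof (induction rule: rtrancl_induct)
    case (step y z)
    from step.hyps(2) obtain f where f: "f \<in> insert e F" "y \<in> f" "z \<in> f"
      unfolding adj_def by auto
    show ?case
    proof (cases "f = e")
      case True
      with step.IH f show ?thesis by auto
    next
      case False
      with f have "(y, z) \<in> adj F" unfolding adj_def by auto
      with step.IH show ?thesis by (meson rtrancl.rtrancl_into_rtrancl)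
    qed
  qed simp
next
  have lift: "conn F u v \<Longrightarrow> conn (insert e F) u v" for u v by (rule conn_mono) auto
  assume "conn F x y \<or> (\<exists>a\<in>e. \<exists>b\<in>e. conn F x a \<and> conn F b y)"
  thus "conn (insert e F) x y"
  proof
    assume "\<exists>a\<in>e. \<exists>b\<in>e. conn F x a \<and> conn F b y"
    then obtain a b where ab: "a \<in> e" "b \<in> e" "conn F x a" "conn F b y" by blast
    have "conn (insert e F) a b" using ab by (intro conn_edge) auto
    thus ?thesis using ab lift conn_trans by blast
  qed (rule lift)
qed

section \<open>Cycles and connectivity\<close>

definition simple_path :: "nat set set \<Rightarrow> nat list \<Rightarrow> nat set list \<Rightarrow> bool" where
  "simple_path F vs es \<longleftrightarrow> length vs = Suc (length es) \<and> distinct vs \<and> distinct es \<and> set es \<subseteq> F \<and>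
     (\<forall>i<length es. vs ! i \<in> es ! i \<and> vs ! Suc i \<in> es ! i)"

lemma simple_path_prefix:
  assumes "simple_path F vs es" "i < length vs"
  shows "simple_path F (take (Suc i) vs) (take i es)"
  using assms unfolding simple_path_def by (auto simp: distinct_take dest: in_set_takeD)

lemma simple_path_snoc:
  assumes p: "simple_path F vs es" and z: "z \<notin> set vs" and f: "f \<notin> set es" "f \<in> F"
    and ends: "vs ! length es \<in> f" "z \<in> f"
  shows "simple_path F (vs @ [z]) (es @ [f])"
  using p z f ends unfolding simple_path_def
  by (auto simp: nth_append less_Suc_eq)

lemma conn_simple_path:
  assumes "conn F a b"
  shows "\<exists>vs es. simple_path F vs es \<and> vs ! 0 = a \<and> vs ! length es = b"
  using assms unfolding conn_def
proof (induction rule: rtrancl_induct)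
  case base
  have "simple_path F [a] []" by (simp add: simple_path_def)
  thus ?case by force
next
  case (step y z)
  from step.IH obtain vs es where p: "simple_path F vs es" "vs ! 0 = a" "vs ! length es = y" by blast
  from step.hyps(2) obtain f where f: "f \<in> F" "y \<in> f" "z \<in> f" unfolding adj_def by auto
  have L: "length vs = Suc (length es)" using p(1) unfolding simple_path_def by simp
  show ?case
  proof (cases "z \<in> set vs")
    case True
    then obtain i where i: "i < length vs" "vs ! i = z" by (auto simp: in_set_conv_nth)
    have "simple_path F (take (Suc i) vs) (take i es)" using simple_path_prefix[OF p(1) i(1)] .
    moreover have "take (Suc i) vs ! length (take i es) = z" using i L by auto
    ultimately show ?thesis using p(2) by force
  next
    case zn: False
    show ?thesis
    proof (cases "f \<in> set es")
      case True
      then obtain i where i: "i < length es" "es ! i = f" by (auto simp: in_set_conv_nth)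
      have de: "distinct es" and vi: "vs ! i \<in> es ! i" using p(1) i(1) unfolding simple_path_def by auto
      have "f \<notin> set (take i es)" using de i by (auto simp: in_set_conv_nth nth_eq_iff_index_eq)
      moreover have "z \<notin> set (take (Suc i) vs)" using zn by (auto dest: in_set_takeD)
      ultimately have "simple_path F (take (Suc i) vs @ [z]) (take i es @ [f])"
        using simple_path_snoc[OF simple_path_prefix[OF p(1)]] f vi i L by auto
      moreover have "(take (Suc i) vs @ [z]) ! 0 = a" using p(2) L by (simp add: nth_append)
      moreover have "(take (Suc i) vs @ [z]) ! length (take i es @ [f]) = z"
        using i L by (auto simp: nth_append)
      ultimately show ?thesis by blast
    next
      case False
      have "simple_path F (vs @ [z]) (es @ [f])" using simple_path_snoc[OF p(1) zn False] f p(3) by blast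
      moreover have "(vs @ [z]) ! 0 = a" using p(2) L by (simp add: nth_append)
      moreover have "(vs @ [z]) ! length (es @ [f]) = z" using L by (simp add: nth_append)
      ultimately show ?thesis by blast
    qed
  qed
qed

lemma has_cycle_mono: "F \<subseteq> G \<Longrightarrow> has_cycle F \<Longrightarrow> has_cycle G"
  unfolding has_cycle_def by blast

lemma cycle_from_conn:
  assumes "e \<notin> F" "a \<in> e" "b \<in> e" "a \<noteq> b" "conn F a b"
  shows "has_cycle (insert e F)"
proof -
  obtain vs es where p: "simple_path F vs es" "vs ! 0 = a" "vs ! length es = b"
    using conn_simple_path[OF assms(5)] by blast
  have L: "length vs = Suc (length es)" and dv: "distinct vs" and de: "distinct es"
    and sF: "set es \<subseteq> F" and ed: "\<forall>i<length es. vs ! i \<in> es ! i \<and> vs ! Suc i \<in> es ! i"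
    using p(1) unfolding simple_path_def by auto
  have ne: "length es \<noteq> 0" using p assms(4) by auto
  let ?es = "es @ [e]"
  have "\<forall>i < length vs. vs ! i \<in> ?es ! i \<and> vs ! ((i + 1) mod length vs) \<in> ?es ! i"
  proof (intro allI impI)
    fix i assume i: "i < length vs"
    show "vs ! i \<in> ?es ! i \<and> vs ! ((i + 1) mod length vs) \<in> ?es ! i"
    proof (cases "i < length es")
      case True
      thus ?thesis using ed L by (simp add: nth_append)
    next
      case False
      hence "i = length es" using i L by simp
      thus ?thesis using L p assms by (simp add: nth_append)
    qed
  qed
  moreover have "distinct ?es" "set ?es \<subseteq> insert e F" using de sF assms(1) by auto
  moreover have "length vs \<ge> 2" using L ne by linarith
  ultimately show ?thesis unfolding has_cycle_def using dv L
    by (intro exI[of _ vs] exI[of _ ?es]) auto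
qed

lemma mod_step_ne: "i < L \<Longrightarrow> Suc d < L \<Longrightarrow> (i + 1 + d) mod L \<noteq> i"
  by (cases "i + 1 + d < L") (auto simp: le_mod_geq)

text \<open>Conversely, a cycle through the new edge e yields two distinct vertices of e that are
  linked around the rest of the cycle.\<close>
lemma cycle_insert_D:
  assumes "has_cycle (insert e F)"
  shows "has_cycle F \<or> (\<exists>a\<in>e. \<exists>b\<in>e. a \<noteq> b \<and> conn F a b)"
proof -
  obtain vs es where c: "length vs = length es" "length vs \<ge> 2" "distinct vs" "distinct es"
     "set es \<subseteq> insert e F"
     "\<forall>i < length vs. vs ! i \<in> es ! i \<and> vs ! ((i + 1) mod length vs) \<in> es ! i"
    using assms unfolding has_cycle_def by blast
  show ?thesis
  proof (cases "e \<in> set es")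
    case False
    hence "has_cycle F" unfolding has_cycle_def using c by blast
    thus ?thesis by blast
  next
    case True
    then obtain i where i: "i < length es" "es ! i = e" by (auto simp: in_set_conv_nth)
    define L where "L = length vs"
    have L2: "L \<ge> 2" and iL: "i < L" using c i L_def by auto
    have around: "conn F (vs ! ((i + 1) mod L)) (vs ! ((i + 1 + d) mod L))" if "d < L" for d
      using that
    proof (induction d)
      case (Suc d)
      define t where "t = (i + 1 + d) mod L"
      have tL: "t < L" using L2 t_def by simp
      have "t \<noteq> i" using mod_step_ne[OF iL Suc.prems] t_def by simp
      hence "es ! t \<noteq> e" using c(4) tL i c(1) L_def nth_eq_iff_index_eq by metis
      hence eF: "es ! t \<in> F" using c(5) tL c(1) L_def nth_mem by fastforce
      have "(t + 1) mod L = (i + 1 + Suc d) mod L" unfolding t_def by (simp add: mod_Suc_eq)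
      hence "conn F (vs ! t) (vs ! ((i + 1 + Suc d) mod L))"
        using c(6) tL L_def conn_edge[OF eF] by metis
      moreover have "conn F (vs ! ((i + 1) mod L)) (vs ! t)" using Suc t_def by simp
      ultimately show ?case using conn_trans by blast
    qed simp
    have "(i + 1 + (L - 1)) mod L = i" using iL L2 by simp
    hence "conn F (vs ! ((i + 1) mod L)) (vs ! i)" using around[of "L - 1"] L2 by simp
    moreover have "vs ! i \<in> e" "vs ! ((i + 1) mod L) \<in> e" using c(6) i c(1) L_def by auto
    moreover have "vs ! ((i + 1) mod L) \<noteq> vs ! i"
    proof -
      have "(i + 1) mod L \<noteq> i" "(i + 1) mod L < L" using mod_step_ne[of i L 0] iL L2 by auto
      thus ?thesis using c(3) iL L_def nth_eq_iff_index_eq by metis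
    qed
    ultimately show ?thesis by blast
  qed
qed

lemma forest_insert:
  assumes "e \<notin> F"
  shows "\<not> has_cycle (insert e F) \<longleftrightarrow> \<not> has_cycle F \<and> (\<forall>a\<in>e. \<forall>b\<in>e. conn F a b \<longrightarrow> a = b)"
  using cycle_insert_D[of e F] cycle_from_conn[OF assms] has_cycle_mono[of F "insert e F"]
  by blast

lemma forest_remove_edge:
  assumes "\<not> has_cycle G" "e \<in> G" "a \<in> e" "b \<in> e" "conn (G - {e}) a b"
  shows "a = b"
proof -
  have "G = insert e (G - {e})" using assms(2) by auto
  thus ?thesis using forest_insert[of e "G - {e}"] assms by auto
qed

section \<open>Markings of a forest\<close>

text \<open>A mark is either a vertex (a root, Inl) or an edge (a marked edge, Inr).\<close>
type_synonym mark = "nat + nat set"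

definition reaches :: "nat set set \<Rightarrow> nat \<Rightarrow> mark \<Rightarrow> bool" where
  "reaches F x m = (case m of Inl r \<Rightarrow> conn F x r | Inr b \<Rightarrow> (\<exists>y\<in>b. conn F x y))"

definition mark_valid :: "nat set \<Rightarrow> nat set set \<Rightarrow> mark \<Rightarrow> bool" where
  "mark_valid V F m = (case m of Inl x \<Rightarrow> x \<in> V | Inr b \<Rightarrow> b \<in> F)"

text \<open>A marking of (V, F) is a set of valid marks such that every vertex reaches exactly one of
  them, i.e. every component carries exactly one mark.\<close>
definition marking :: "nat set \<Rightarrow> nat set set \<Rightarrow> mark set \<Rightarrow> bool" where
  "marking V F M \<longleftrightarrow> (\<forall>m\<in>M. mark_valid V F m) \<and> (\<forall>x\<in>V. \<exists>!m. m \<in> M \<and> reaches F x m)"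

lemma reaches_Inl [simp]: "reaches F x (Inl r) = conn F x r"
  unfolding reaches_def by simp

lemma reaches_Inr [simp]: "reaches F x (Inr b) = (\<exists>y\<in>b. conn F x y)"
  unfolding reaches_def by simp

lemma mark_valid_Inl [simp]: "mark_valid V F (Inl r) = (r \<in> V)"
  unfolding mark_valid_def by simp

lemma mark_valid_Inr [simp]: "mark_valid V F (Inr b) = (b \<in> F)"
  unfolding mark_valid_def by simp

lemma reaches_mono: "F \<subseteq> G \<Longrightarrow> reaches F x m \<Longrightarrow> reaches G x m"
  by (cases m) (auto intro: conn_mono)

lemma reaches_trans: "conn F x y \<Longrightarrow> reaches F y m \<Longrightarrow> reaches F x m"
  by (cases m) (auto intro: conn_trans)

lemma reaches_same:
  assumes "reaches F x m" "reaches F y m" "mark_valid V F m"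
  shows "conn F x y"
proof (cases m)
  case (Inl r)
  thus ?thesis using assms by (auto intro: conn_trans conn_sym)
next
  case (Inr b)
  then obtain y1 y2 where "y1 \<in> b" "y2 \<in> b" "conn F x y1" "conn F y y2" "b \<in> F"
    using assms by auto
  moreover have "conn F y1 y2" using calculation by (intro conn_edge) auto
  ultimately show ?thesis by (meson conn_sym conn_trans)
qed

lemma reaches_insert:
  "reaches (insert e F) x m \<longleftrightarrow> reaches F x m \<or> ((\<exists>a\<in>e. conn F x a) \<and> (\<exists>b\<in>e. reaches F b m))"
  by (cases m) (auto simp: conn_insert)

lemma reaches_insert_far:
  "\<not> (\<exists>a\<in>e. conn F x a) \<Longrightarrow> reaches (insert e F) x m \<longleftrightarrow> reaches F x m"
  using reaches_insert by blast

lemma marking_valid: "marking V F M \<Longrightarrow> m \<in> M \<Longrightarrow> mark_valid V F m"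
  unfolding marking_def by auto

lemma marking_uniq:
  "marking V F M \<Longrightarrow> x \<in> V \<Longrightarrow> m \<in> M \<Longrightarrow> reaches F x m \<Longrightarrow> m' \<in> M \<Longrightarrow> reaches F x m'
    \<Longrightarrow> m = m'"
  unfolding marking_def by metis

lemma marking_ex: "marking V F M \<Longrightarrow> x \<in> V \<Longrightarrow> \<exists>m\<in>M. reaches F x m"
  unfolding marking_def by metis

lemma marking_Inl: "marking V F M \<Longrightarrow> Inl a \<in> M \<Longrightarrow> a \<in> V"
  using marking_valid by fastforce

lemma marking_Inr: "marking V F M \<Longrightarrow> Inr b \<in> M \<Longrightarrow> b \<in> F"
  using marking_valid by fastforce

lemma roots_unlinked: "marking V F M \<Longrightarrow> Inl a \<in> M \<Longrightarrow> Inl b \<in> M \<Longrightarrow> conn F a b \<Longrightarrow> a = b"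
  using marking_uniq[of V F M a "Inl a" "Inl b"] marking_Inl by auto

lemma reaches_root: "marking V F M \<Longrightarrow> Inl a \<in> M \<Longrightarrow> m \<in> M \<Longrightarrow> reaches F a m \<Longrightarrow> m = Inl a"
  using marking_uniq[of V F M a m "Inl a"] marking_Inl by auto

lemma reached_marks_vertex:
  "marking V F M \<Longrightarrow> x \<in> V \<Longrightarrow> m0 \<in> M \<Longrightarrow> reaches F x m0 \<Longrightarrow> {m\<in>M. reaches F x m} = {m0}"
  using marking_uniq[of V F M x m0] by blast

lemma reached_marks_roots:
  assumes "marking V F M" "S \<subseteq> Inl -` M"
  shows "{m\<in>M. \<exists>a\<in>S. reaches F a m} = Inl ` S"
proof (intro equalityI subsetI)
  fix m assume "m \<in> {m\<in>M. \<exists>a\<in>S. reaches F a m}"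
  then obtain a where "m \<in> M" "a \<in> S" "reaches F a m" by blast
  thus "m \<in> Inl ` S" using reaches_root[OF assms(1)] assms(2) by blast
next
  fix m :: mark assume "m \<in> Inl ` S"
  then obtain a where "a \<in> S" "m = Inl a" by blast
  thus "m \<in> {m\<in>M. \<exists>a\<in>S. reaches F a m}" using assms(2) by (auto intro!: bexI[of _ a])
qed

lemma marking_empty: "marking V {} M \<longleftrightarrow> M = Inl ` V"
proof
  assume mk: "marking V {} M"
  have sub: "m \<in> M \<Longrightarrow> m \<in> Inl ` V" for m using marking_valid[OF mk, of m] by (cases m) auto
  have "Inl x \<in> M" if x: "x \<in> V" for x
  proof -
    obtain m where "m \<in> M" "reaches {} x m" using marking_ex[OF mk x] by blast
    thus ?thesis using sub by (cases m) (auto simp: conn_empty)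
  qed
  thus "M = Inl ` V" using sub by auto
qed (auto simp: marking_def conn_empty)

text \<open>Inserting an edge e merges the components meeting e; their marks N are replaced by a single
  mark m0, which is one of them or the new edge itself.\<close>
lemma marking_merge:
  assumes mk: "marking V F M" and N: "N = {m\<in>M. \<exists>a\<in>e. reaches F a m}"
    and m0: "m0 \<in> N \<or> m0 = Inr e"
  shows "marking V (insert e F) ((M - N) \<union> {m0})"
  unfolding marking_def
proof (intro conjI ballI)
  fix m assume "m \<in> (M - N) \<union> {m0}"
  thus "mark_valid V (insert e F) m" using mk m0 N unfolding marking_def mark_valid_def
    by (auto split: sum.splits)
next
  fix x assume x: "x \<in> V"
  obtain mx where mx: "mx \<in> M" "reaches F x mx"
    and mx_uniq: "\<And>m. m \<in> M \<Longrightarrow> reaches F x m \<Longrightarrow> m = mx"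
    using mk x unfolding marking_def by metis
  show "\<exists>!m. m \<in> (M - N) \<union> {m0} \<and> reaches (insert e F) x m"
  proof (cases "\<exists>a\<in>e. conn F x a")
    case True
    then obtain a where a: "a \<in> e" "conn F x a" by blast
    have "reaches (insert e F) x m0"
    proof (cases "m0 = Inr e")
      case True
      have "conn (insert e F) x a" using a by (auto intro: conn_mono)
      thus ?thesis using True a by auto
    next
      case False
      then obtain a' where "a' \<in> e" "reaches F a' m0" using N m0 by auto
      thus ?thesis using reaches_insert True by blast
    qed
    moreover have "m = m0" if "m \<in> (M - N) \<union> {m0}" "reaches (insert e F) x m" for m
    proof (rule ccontr)
      assume "m \<noteq> m0"
      hence "m \<in> M" "m \<notin> N" using that by auto
      moreover have "\<exists>b\<in>e. reaches F b m"
        using that(2) reaches_insert a reaches_trans[OF conn_sym[OF a(2)]] by blast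
      ultimately show False using N by auto
    qed
    ultimately show ?thesis by blast
  next
    case far: False
    have "\<not> (\<exists>a\<in>e. reaches F a m)" if "m \<in> M" "reaches F x m" for m
      using far reaches_same[OF that(2) _ marking_valid[OF mk that(1)]] by blast
    hence "mx \<notin> N" "\<not> reaches F x m0" using mx N m0 far by auto
    thus ?thesis
    proof (intro ex1I[of _ mx] conjI)
      show "mx \<in> M - N \<union> {m0}" "reaches (insert e F) x mx"
        using mx \<open>mx \<notin> N\<close> reaches_insert_far[OF far] by auto
    next
      fix m assume "m \<in> M - N \<union> {m0} \<and> reaches (insert e F) x m"
      thus "m = mx" using \<open>\<not> reaches F x m0\<close> mx_uniq reaches_insert_far[OF far] by auto
    qed
  qed
qed

lemma marking_split_edge:
  assumes mk: "marking V G M" and eM: "Inr e \<in> M" and acyc: "\<not> has_cycle G" and eV: "e \<subseteq> V"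
  shows "marking V (G - {e}) ((M - {Inr e}) \<union> Inl ` e)"
proof -
  define F where "F = G - {e}"
  have eG: "e \<in> G" using marking_Inr[OF mk eM] .
  hence G: "G = insert e F" using F_def by auto
  have sep: "\<And>a b. a \<in> e \<Longrightarrow> b \<in> e \<Longrightarrow> conn F a b \<Longrightarrow> a = b"
    using forest_remove_edge[OF acyc eG] F_def by blast
  show ?thesis unfolding F_def[symmetric] marking_def
  proof (intro conjI ballI)
    fix m assume "m \<in> M - {Inr e} \<union> Inl ` e"
    thus "mark_valid V F m" using marking_valid[OF mk, of m] eV F_def
      by (auto simp: mark_valid_def split: sum.splits)
  next
    fix x assume x: "x \<in> V"
    obtain mx where mx: "mx \<in> M" "reaches G x mx"
      and mx_uniq: "\<And>m. m \<in> M \<Longrightarrow> reaches G x m \<Longrightarrow> m = mx"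
      using mk x unfolding marking_def by metis
    show "\<exists>!m. m \<in> M - {Inr e} \<union> Inl ` e \<and> reaches F x m"
    proof (cases "\<exists>a\<in>e. conn F x a")
      case True
      then obtain a where a: "a \<in> e" "conn F x a" by blast
      show ?thesis
      proof (rule ex1I[of _ "Inl a"])
        show "Inl a \<in> M - {Inr e} \<union> Inl ` e \<and> reaches F x (Inl a)" using a by auto
      next
        fix m assume m: "m \<in> M - {Inr e} \<union> Inl ` e \<and> reaches F x m"
        show "m = Inl a"
        proof (cases "m \<in> Inl ` e")
          case True
          then obtain a' where "a' \<in> e" "m = Inl a'" by auto
          thus ?thesis using m a sep by (metis conn_sym conn_trans reaches_Inl)
        next
          case False
          hence "m \<in> M" "m \<noteq> Inr e" using m by auto
          moreover have "reaches G x m" using m G reaches_mono[of F G] by auto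
          moreover have "reaches G x (Inr e)" using a G conn_mono[of F G] by auto
          ultimately show ?thesis using mx_uniq eM by metis
        qed
      qed
    next
      case far: False
      have "mx \<noteq> Inr e" using mx(2) far reaches_insert_far[OF far] G by auto
      show ?thesis
      proof (rule ex1I[of _ mx])
        show "mx \<in> M - {Inr e} \<union> Inl ` e \<and> reaches F x mx"
          using mx \<open>mx \<noteq> Inr e\<close> reaches_insert_far[OF far] G by auto
      next
        fix m assume "m \<in> M - {Inr e} \<union> Inl ` e \<and> reaches F x m"
        thus "m = mx" using far reaches_insert_far[OF far] G mx_uniq by auto
      qed
    qed
  qed
qed

lemma marking_replace:
  assumes mk: "marking V F M" and m: "m \<in> M" and m': "mark_valid V F m'"
    and same: "\<And>y. y \<in> V \<Longrightarrow> reaches F y m' \<longleftrightarrow> reaches F y m"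
  shows "marking V F ((M - {m}) \<union> {m'})"
  unfolding marking_def
proof (intro conjI ballI)
  fix x assume x: "x \<in> V"
  obtain mx where mx: "mx \<in> M" "reaches F x mx"
    and mx_uniq: "\<And>m. m \<in> M \<Longrightarrow> reaches F x m \<Longrightarrow> m = mx"
    using mk x unfolding marking_def by metis
  let ?new = "if mx = m then m' else mx"
  show "\<exists>!m''. m'' \<in> (M - {m}) \<union> {m'} \<and> reaches F x m''"
  proof (rule ex1I[of _ ?new])
    show "?new \<in> (M - {m}) \<union> {m'} \<and> reaches F x ?new" using mx same[OF x] by auto
  next
    fix m'' assume m'': "m'' \<in> (M - {m}) \<union> {m'} \<and> reaches F x m''"
    show "m'' = ?new"
    proof (cases "m'' = m'")
      case True
      thus ?thesis using m'' mx_uniq[OF m] same[OF x] by auto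
    next
      case False
      thus ?thesis using m'' mx_uniq by auto
    qed
  qed
qed (use mk m' in \<open>auto simp: marking_def\<close>)

text \<open>Removing an unmarked edge e: if h is the vertex of e whose new component still reaches an
  old mark mh, the other vertices of e become roots of the split-off components.  Indeed, first
  move mh onto e, then split the marked edge e, and finally move the root h back to mh.\<close>
lemma marking_split_vertex:
  assumes mk: "marking V G M" and eG: "e \<in> G" and eM: "Inr e \<notin> M" and acyc: "\<not> has_cycle G"
    and eV: "e \<subseteq> V" and h: "h \<in> e" "mh \<in> M" "reaches (G - {e}) h mh"
  shows "marking V (G - {e}) (M \<union> Inl ` (e - {h}))"
proof -
  define F where "F = G - {e}"
  have G: "G = insert e F" using eG F_def by auto
  have hF: "reaches F h mh" using h F_def by simp
  have valid_F: "mark_valid V F mh" using marking_valid[OF mk h(2)] h(2) eM F_def by (cases mh) auto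
  have mh_F: "reaches F y mh \<longleftrightarrow> conn F y h" for y
    using reaches_same[OF _ hF valid_F] reaches_trans[OF _ hF] by blast
  have "reaches G y (Inr e) \<longleftrightarrow> reaches G y mh" for y
  proof -
    have "reaches G y (Inr e) \<longleftrightarrow> conn G y h"
      using conn_edge[OF eG] h(1) conn_trans by auto
    also have "\<dots> \<longleftrightarrow> reaches G y mh"
      using reaches_same[OF _ reaches_mono[OF _ hF] marking_valid[OF mk h(2)]]
        reaches_trans[OF _ reaches_mono[OF _ hF]] G by blast
    finally show ?thesis .
  qed
  hence "marking V G ((M - {mh}) \<union> {Inr e})"
    using marking_replace[OF mk h(2)] eG by simp
  hence "marking V F (((M - {mh}) \<union> {Inr e} - {Inr e}) \<union> Inl ` e)"
    unfolding F_def by (rule marking_split_edge) (use acyc eV in auto)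
  moreover have "(M - {mh}) \<union> {Inr e} - {Inr e} = M - {mh}" using eM h(2) by auto
  ultimately have split: "marking V F ((M - {mh}) \<union> Inl ` e)" by simp
  have "reaches F y mh \<longleftrightarrow> reaches F y (Inl h)" for y using mh_F by simp
  hence "marking V F ((M - {mh}) \<union> Inl ` e - {Inl h} \<union> {mh})"
    using marking_replace[OF split _ valid_F] h(1) by blast
  moreover have "(M - {mh}) \<union> Inl ` e - {Inl h} \<union> {mh} = M \<union> Inl ` (e - {h})"
  proof -
    have "reaches G h mh" using reaches_mono[OF _ hF] G by blast
    hence "Inl h \<in> M \<Longrightarrow> mh = Inl h"
      using marking_uniq[OF mk _ _ _ h(2), of h "Inl h"] eV h(1) by auto
    moreover have "mh \<notin> Inl ` (e - {h})"
    proof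
      assume "mh \<in> Inl ` (e - {h})"
      then obtain a where "a \<in> e" "a \<noteq> h" "mh = Inl a" by blast
      thus False using hF forest_remove_edge[OF acyc eG h(1), of a] F_def by simp
    qed
    ultimately show ?thesis using h(2) by auto
  qed
  ultimately show ?thesis unfolding F_def by simp
qed

section \<open>Marked forests\<close>

definition edges_on :: "nat set \<Rightarrow> nat \<Rightarrow> nat set set" where
  "edges_on V k = {e. e \<subseteq> V \<and> card e = k}"

definition marked_forests :: "nat set \<Rightarrow> nat \<Rightarrow> nat \<Rightarrow> nat \<Rightarrow> nat \<Rightarrow> (nat set set \<times> mark set) set"
  where
  "marked_forests V k j r q = {(F, M). F \<subseteq> edges_on V k \<and> \<not> has_cycle F \<and> card F = j \<and>
      marking V F M \<and> card (Inl -` M) = r \<and> card (Inr -` M) = q}"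

lemma finite_edges_on: "finite V \<Longrightarrow> finite (edges_on V k)"
  unfolding edges_on_def by (rule finite_subset[of _ "Pow V"]) auto

lemma edges_onD: "F \<subseteq> edges_on V k \<Longrightarrow> e \<in> F \<Longrightarrow> e \<subseteq> V \<and> card e = k"
  unfolding edges_on_def by auto

lemma marked_forestsD:
  assumes "(F, M) \<in> marked_forests V k j r q" "finite V"
  shows "F \<subseteq> edges_on V k" "\<not> has_cycle F" "card F = j" "marking V F M" "card (Inl -` M) = r"
    "card (Inr -` M) = q" "finite F" "finite (Inl -` M)" "finite (Inr -` M)" "Inr -` M \<subseteq> F"
    "Inl -` M \<subseteq> V"
proof -
  show F: "F \<subseteq> edges_on V k" "\<not> has_cycle F" "card F = j" "marking V F M" "card (Inl -` M) = r"
    "card (Inr -` M) = q" using assms unfolding marked_forests_def by auto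
  show fF: "finite F" using F(1) finite_edges_on[OF assms(2)] finite_subset by blast
  show s1: "Inr -` M \<subseteq> F" using marking_Inr[OF F(4)] by auto
  show s2: "Inl -` M \<subseteq> V" using marking_Inl[OF F(4)] by auto
  show "finite (Inl -` M)" using s2 assms(2) finite_subset by blast
  show "finite (Inr -` M)" using s1 fF finite_subset by blast
qed

lemma marking_subset: "marking V F M \<Longrightarrow> M \<subseteq> Inl ` V \<union> Inr ` F"
  using marking_valid by (fastforce simp: mark_valid_def split: sum.splits)

lemma finite_marked_forests: "finite V \<Longrightarrow> finite (marked_forests V k j r q)"
proof -
  assume fV: "finite V"
  have "marked_forests V k j r q \<subseteq> Pow (edges_on V k) \<times> Pow (Inl ` V \<union> Inr ` edges_on V k)"
    using marking_subset unfolding marked_forests_def by blast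
  moreover have "finite (Pow (edges_on V k) \<times> Pow (Inl ` V \<union> Inr ` edges_on V k))"
    using fV finite_edges_on by auto
  ultimately show ?thesis using finite_subset by blast
qed

lemma no_marked_edge: "(F, M) \<in> marked_forests V k j r 0 \<Longrightarrow> finite V \<Longrightarrow> Inr b \<notin> M"
  using marked_forestsD(6,9)[of F M V k j r 0] by auto

lemma marked_forests_0:
  assumes "finite V"
  shows "marked_forests V k 0 r q = (if r = card V \<and> q = 0 then {({}, Inl ` V)} else {})"
proof -
  have c1: "card (Inl -` (Inl ` V :: mark set)) = card V" by (metis inj_Inl inj_vimage_image_eq)
  have c2: "Inr -` (Inl ` V :: mark set) = {}" by auto
  have "(F, M) \<in> marked_forests V k 0 r q \<longleftrightarrow> F = {} \<and> M = Inl ` V \<and> r = card V \<and> q = 0"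
    for F M
  proof
    assume mf: "(F, M) \<in> marked_forests V k 0 r q"
    have "F = {}" using marked_forestsD[OF mf assms] by auto
    moreover hence "M = Inl ` V" using marked_forestsD(4)[OF mf assms] marking_empty by auto
    ultimately show "F = {} \<and> M = Inl ` V \<and> r = card V \<and> q = 0"
      using marked_forestsD(5,6)[OF mf assms] c1 c2 by simp
  next
    assume "F = {} \<and> M = Inl ` V \<and> r = card V \<and> q = 0"
    thus "(F, M) \<in> marked_forests V k 0 r q" unfolding marked_forests_def using marking_empty c1 c2
      by (auto simp: has_cycle_def)
  qed
  thus ?thesis by auto
qed

text \<open>For an unmarked edge e of a marked forest, exactly one vertex of e (its head) still reaches
  a mark after e is removed: the components of the other vertices carried no mark.\<close>
definition head :: "nat set set \<Rightarrow> mark set \<Rightarrow> nat set \<Rightarrow> nat" where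
  "head G M e = (THE h. h \<in> e \<and> (\<exists>m\<in>M. reaches (G - {e}) h m))"

lemma head_ex1:
  assumes mk: "marking V G M" and acyc: "\<not> has_cycle G" and eG: "e \<in> G" and eV: "e \<subseteq> V"
    and ne: "e \<noteq> {}" and eM: "Inr e \<notin> M"
  shows "\<exists>!h. h \<in> e \<and> (\<exists>m\<in>M. reaches (G - {e}) h m)"
proof -
  define F where "F = G - {e}"
  have G: "G = insert e F" using eG F_def by auto
  have sep: "\<And>a b. a \<in> e \<Longrightarrow> b \<in> e \<Longrightarrow> conn F a b \<Longrightarrow> a = b"
    using forest_remove_edge[OF acyc eG] F_def by blast
  obtain a0 where a0: "a0 \<in> e" using ne by blast
  obtain m0 where m0: "m0 \<in> M" "reaches G a0 m0" using marking_ex[OF mk] a0 eV by blast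
  have "reaches F a0 m0 \<or> (\<exists>b\<in>e. reaches F b m0)" using m0(2) reaches_insert G by metis
  hence ex: "\<exists>h. h \<in> e \<and> (\<exists>m\<in>M. reaches F h m)" using a0 m0(1) by blast
  have uniq: "h = h'" if h: "h \<in> e" "m \<in> M" "reaches F h m" and h': "h' \<in> e" "m' \<in> M" "reaches F h' m'"
    for h h' m m'
  proof -
    have "reaches G h m" using h(3) G reaches_mono[of F G] by blast
    moreover have "conn G h h'" using G h h' by (intro conn_edge) auto
    hence "reaches G h m'" using reaches_trans h'(3) G reaches_mono[of F G] by blast
    ultimately have "m = m'" using marking_uniq[OF mk, of h m m'] h h' eV by auto
    moreover have "mark_valid V F m" using marking_valid[OF mk h(2)] h(2) eM F_def by (cases m) auto
    ultimately have "conn F h h'" using reaches_same[OF h(3)] h'(3) by blast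
    thus ?thesis using sep h h' by blast
  qed
  show ?thesis using ex uniq unfolding F_def by blast
qed

lemma head_prop:
  assumes "marking V G M" "\<not> has_cycle G" "e \<in> G" "e \<subseteq> V" "e \<noteq> {}" "Inr e \<notin> M"
  shows "head G M e \<in> e \<and> (\<exists>m\<in>M. reaches (G - {e}) (head G M e) m)"
  unfolding head_def using theI'[OF head_ex1[OF assms]] .

lemma head_eq:
  assumes "marking V G M" "\<not> has_cycle G" "e \<in> G" "e \<subseteq> V" "e \<noteq> {}" "Inr e \<notin> M"
    and "h \<in> e" "m \<in> M" "reaches (G - {e}) h m"
  shows "head G M e = h"
  unfolding head_def using the1_equality[OF head_ex1[OF assms(1-6)]] assms(7-9) by blast

section \<open>Two edge-removal bijections\<close>

lemma card_Sigma_const: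
  assumes "finite A" "\<And>x. x \<in> A \<Longrightarrow> finite (B x) \<and> card (B x) = c"
  shows "card (Sigma A B) = card A * c"
  using assms by (simp add: card_SigmaI)

lemma join_unmarked_edge:
  assumes fV: "finite V" and k: "k \<ge> 2" and mf: "(F, M) \<in> marked_forests V k j (r + k - 1) 0"
    and v: "v \<in> V" and S: "S \<subseteq> Inl -` M" "card S = k - 1" and far: "\<forall>s\<in>S. \<not> conn F v s"
  shows "(insert (insert v S) F, M - Inl ` S) \<in> marked_forests V k (Suc j) r 0"
    and "head (insert (insert v S) F) (M - Inl ` S) (insert v S) = v"
    and "insert v S \<notin> F" and "v \<notin> S"
proof -
  note D = marked_forestsD[OF mf fV]
  have no_Inr: "\<And>b. Inr b \<notin> M" using no_marked_edge[OF mf fV] .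
  have SV: "S \<subseteq> V" using S D(11) by auto
  have fS: "finite S" using SV fV finite_subset by blast
  show vS: "v \<notin> S" using far conn_refl by blast
  define e where "e = insert v S"
  have ce: "card e = k" and eV: "e \<subseteq> V" using e_def fS vS S(2) k SV v by auto
  have sep: "\<forall>a\<in>e. \<forall>b\<in>e. conn F a b \<longrightarrow> a = b"
    using far roots_unlinked[OF D(4)] S conn_sym unfolding e_def by blast
  show eF: "insert v S \<notin> F"
  proof
    assume "insert v S \<in> F"
    moreover obtain s where "s \<in> S" using S(2) k by fastforce
    ultimately show False using conn_edge[of "insert v S" F v s] far by blast
  qed
  hence eF': "e \<notin> F" using e_def by simp
  have acyc: "\<not> has_cycle (insert e F)" using forest_insert[OF eF'] D(2) sep by blast
  obtain m0 where m0: "m0 \<in> M" "reaches F v m0" using marking_ex[OF D(4) v] by blast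
  obtain s0 where s0: "m0 = Inl s0" using no_Inr m0(1) by (cases m0) auto
  have s0S: "s0 \<notin> S" using far m0(2) s0 by auto
  have "{m\<in>M. \<exists>a\<in>e. reaches F a m} = {m\<in>M. reaches F v m} \<union> {m\<in>M. \<exists>a\<in>S. reaches F a m}"
    unfolding e_def by blast
  hence N: "{m\<in>M. \<exists>a\<in>e. reaches F a m} = insert (Inl s0) (Inl ` S)"
    using reached_marks_vertex[OF D(4) v m0] reached_marks_roots[OF D(4) S(1)] s0 by simp
  have "marking V (insert e F) ((M - insert (Inl s0) (Inl ` S)) \<union> {Inl s0})"
    by (rule marking_merge[OF D(4) N[symmetric]]) simp
  moreover have "(M - insert (Inl s0) (Inl ` S)) \<union> {Inl s0} = M - Inl ` S"
    using m0 s0 s0S by auto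
  ultimately have mk: "marking V (insert e F) (M - Inl ` S)" by simp
  have "card (Inl -` (M - Inl ` S)) = r"
    using card_Diff_subset[OF fS S(1)] D(5) S(2) k by (simp add: vimage_Diff inj_vimage_image_eq)
  moreover have "Inr -` (M - Inl ` S) = {}" using no_Inr by auto
  moreover have "card (insert e F) = Suc j" using D(3,7) eF' by simp
  moreover have "insert e F \<subseteq> edges_on V k" using D(1) eV ce unfolding edges_on_def by auto
  ultimately show "(insert (insert v S) F, M - Inl ` S) \<in> marked_forests V k (Suc j) r 0"
    unfolding marked_forests_def using acyc mk e_def by auto
  have "reaches (insert e F - {e}) v (Inl s0)" "Inl s0 \<in> M - Inl ` S"
    using m0 s0 s0S eF' by auto
  thus "head (insert (insert v S) F) (M - Inl ` S) (insert v S) = v"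
    using head_eq[OF mk acyc insertI1 eV] no_Inr e_def by auto
qed

lemma cut_unmarked_edge:
  assumes fV: "finite V" and k: "k \<ge> 2" and mf: "(G, M) \<in> marked_forests V k (Suc j) r 0"
    and eG: "e \<in> G" and h: "h = head G M e"
  shows "(G - {e}, M \<union> Inl ` (e - {h})) \<in> marked_forests V k j (r + k - 1) 0"
    and "h \<in> V" "h \<in> e" "card (e - {h}) = k - 1" "\<forall>s\<in>e - {h}. \<not> conn (G - {e}) h s"
    and "M \<inter> Inl ` (e - {h}) = {}"
proof -
  note D = marked_forestsD[OF mf fV]
  have no_Inr: "\<And>b. Inr b \<notin> M" using no_marked_edge[OF mf fV] .
  have eV: "e \<subseteq> V" and ce: "card e = k" using edges_onD[OF D(1) eG] by auto
  have fe: "finite e" using eV fV finite_subset by blast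
  have ne: "e \<noteq> {}" using ce k by auto
  have hp: "h \<in> e \<and> (\<exists>m\<in>M. reaches (G - {e}) h m)"
    using head_prop[OF D(4) D(2) eG eV ne no_Inr] h by simp
  show he: "h \<in> e" using hp by simp
  then show "h \<in> V" using eV by auto
  obtain mh where mh: "mh \<in> M" "reaches (G - {e}) h mh" using hp by blast
  show "\<forall>s\<in>e - {h}. \<not> conn (G - {e}) h s" using forest_remove_edge[OF D(2) eG] he by blast
  show ck: "card (e - {h}) = k - 1" using ce he fe by simp
  show dj: "M \<inter> Inl ` (e - {h}) = {}"
  proof (rule ccontr)
    assume "M \<inter> Inl ` (e - {h}) \<noteq> {}"
    then obtain a where a: "a \<in> e" "a \<noteq> h" "Inl a \<in> M" by auto
    have "head G M e = a" using head_eq[OF D(4) D(2) eG eV ne no_Inr a(1) a(3)] by simp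
    thus False using h a(2) by simp
  qed
  have mk: "marking V (G - {e}) (M \<union> Inl ` (e - {h}))"
    using marking_split_vertex[OF D(4) eG no_Inr D(2) eV he mh] .
  have "Inl -` (M \<union> Inl ` (e - {h})) = Inl -` M \<union> (e - {h})" by auto
  moreover have "Inl -` M \<inter> (e - {h}) = {}" using dj by auto
  ultimately have "card (Inl -` (M \<union> Inl ` (e - {h}))) = r + k - 1"
    using card_Un_disjoint[OF D(8)] fe ck D(5) k by simp
  moreover have "Inr -` (M \<union> Inl ` (e - {h})) = {}" using no_Inr by auto
  moreover have "\<not> has_cycle (G - {e})" using D(2) has_cycle_mono[of "G - {e}" G] by auto
  moreover have "card (G - {e}) = j" using D(3,7) eG by simp
  ultimately show "(G - {e}, M \<union> Inl ` (e - {h})) \<in> marked_forests V k j (r + k - 1) 0"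
    unfolding marked_forests_def using D(1) mk by auto
qed

definition join_choices :: "nat set \<Rightarrow> nat \<Rightarrow> nat set set \<Rightarrow> mark set \<Rightarrow> (nat \<times> nat set) set"
  where
  "join_choices V k F M = {(v, S). v \<in> V \<and> S \<subseteq> Inl -` M \<and> card S = k - 1 \<and> (\<forall>s\<in>S. \<not> conn F v s)}"

text \<open>Every vertex is linked to exactly one of the R roots, so it has (R-1 choose k-1) choices.\<close>
lemma card_join_choices:
  assumes fV: "finite V" and mf: "(F, M) \<in> marked_forests V k j R 0"
  shows "finite (join_choices V k F M) \<and> card (join_choices V k F M) = card V * ((R - 1) choose (k - 1))"
proof -
  note D = marked_forestsD[OF mf fV]
  let ?far = "\<lambda>v. {s \<in> Inl -` M. \<not> conn F v s}"
  have "join_choices V k F M = Sigma V (\<lambda>v. {S. S \<subseteq> ?far v \<and> card S = k - 1})"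
    unfolding join_choices_def by auto
  moreover have "finite {S. S \<subseteq> ?far v \<and> card S = k - 1} \<and>
      card {S. S \<subseteq> ?far v \<and> card S = k - 1} = (R - 1) choose (k - 1)" if v: "v \<in> V" for v
  proof -
    obtain m0 where m0: "m0 \<in> M" "reaches F v m0" using marking_ex[OF D(4) v] by blast
    obtain s0 where s0: "m0 = Inl s0" using no_marked_edge[OF mf fV] m0(1) by (cases m0) auto
    have "?far v = Inl -` M - {s0}"
    proof (intro equalityI subsetI)
      fix s assume "s \<in> Inl -` M - {s0}"
      hence "Inl s \<in> M" "Inl s \<noteq> m0" using s0 by auto
      thus "s \<in> ?far v" using marking_uniq[OF D(4) v _ _ m0] by auto
    qed (use m0 s0 in auto)
    moreover have "s0 \<in> Inl -` M" using m0 s0 by auto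
    ultimately have "finite (?far v)" "card (?far v) = R - 1" using D(5,8) by auto
    thus ?thesis using n_subsets[of "?far v" "k - 1"] by (simp add: finite_subset[of _ "Pow (?far v)"])
  qed
  ultimately show ?thesis using card_Sigma_const[OF fV] fV by (simp add: finite_SigmaI)
qed

definition join_unmarked :: "(nat set set \<times> mark set) \<times> (nat \<times> nat set) \<Rightarrow> (nat set set \<times> mark set) \<times> nat set"
  where "join_unmarked = (\<lambda>((F, M), (v, S)). ((insert (insert v S) F, M - Inl ` S), insert v S))"

definition cut_unmarked :: "(nat set set \<times> mark set) \<times> nat set \<Rightarrow> (nat set set \<times> mark set) \<times> (nat \<times> nat set)"
  where "cut_unmarked = (\<lambda>((G, M), e).
    ((G - {e}, M \<union> Inl ` (e - {head G M e})), (head G M e, e - {head G M e})))"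

lemma join_unmarked_bij:
  assumes fV: "finite V" and k: "k \<ge> 2"
  shows "bij_betw join_unmarked
    (Sigma (marked_forests V k j (r + k - 1) 0) (\<lambda>(F, M). join_choices V k F M))
    (Sigma (marked_forests V k (Suc j) r 0) fst)"
proof (rule bij_betw_byWitness[where f' = cut_unmarked])
  let ?A = "Sigma (marked_forests V k j (r + k - 1) 0) (\<lambda>(F, M). join_choices V k F M)"
  let ?B = "Sigma (marked_forests V k (Suc j) r 0) fst"
  have join_cut: "cut_unmarked (join_unmarked a) = a \<and> join_unmarked a \<in> ?B" if "a \<in> ?A" for a
  proof -
    obtain F M v S where a: "a = ((F, M), (v, S))" by (metis prod.collapse)
    have mf: "(F, M) \<in> marked_forests V k j (r + k - 1) 0" and v: "v \<in> V"
      and S: "S \<subseteq> Inl -` M" "card S = k - 1" and far: "\<forall>s\<in>S. \<not> conn F v s"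
      using that a unfolding join_choices_def by auto
    note J = join_unmarked_edge[OF fV k mf v S far]
    have "insert (insert v S) F - {insert v S} = F" "insert v S - {v} = S" "M - Inl ` S \<union> Inl ` S = M"
      using J(3,4) S by auto
    thus ?thesis using J(1,2) unfolding a join_unmarked_def cut_unmarked_def by simp
  qed
  show "\<forall>a\<in>?A. cut_unmarked (join_unmarked a) = a" using join_cut by blast
  show "join_unmarked ` ?A \<subseteq> ?B" using join_cut by (intro image_subsetI) blast
  have cut_join: "join_unmarked (cut_unmarked b) = b \<and> cut_unmarked b \<in> ?A" if "b \<in> ?B" for b
  proof -
    obtain G M e where b: "b = ((G, M), e)" by (metis prod.collapse)
    have mf: "(G, M) \<in> marked_forests V k (Suc j) r 0" and eG: "e \<in> G" using that b by auto
    note C = cut_unmarked_edge[OF fV k mf eG refl]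
    have "insert e (G - {e}) = G" "insert (head G M e) (e - {head G M e}) = e"
      "M \<union> Inl ` (e - {head G M e}) - Inl ` (e - {head G M e}) = M" using eG C(3,6) by auto
    moreover have "e - {head G M e} \<subseteq> Inl -` (M \<union> Inl ` (e - {head G M e}))" by auto
    ultimately show ?thesis
      using C unfolding b join_unmarked_def cut_unmarked_def join_choices_def by simp
  qed
  show "\<forall>b\<in>?B. join_unmarked (cut_unmarked b) = b" using cut_join by blast
  show "cut_unmarked ` ?B \<subseteq> ?A" using cut_join by (intro image_subsetI) blast
qed

lemma count_unmarked_edge:
  assumes fV: "finite V" and k: "k \<ge> 2"
  shows "Suc j * card (marked_forests V k (Suc j) r 0) =
         card (marked_forests V k j (r + k - 1) 0) * (card V * ((r + k - 2) choose (k - 1)))"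
proof -
  have "card (Sigma (marked_forests V k j (r + k - 1) 0) (\<lambda>(F, M). join_choices V k F M)) =
        card (marked_forests V k j (r + k - 1) 0) * (card V * ((r + k - 2) choose (k - 1)))"
    using card_join_choices[OF fV, of _ _ k j "r + k - 1"] finite_marked_forests[OF fV]
    by (intro card_Sigma_const) (auto simp: numeral_2_eq_2)
  moreover have "card (Sigma (marked_forests V k (Suc j) r 0) fst) =
        card (marked_forests V k (Suc j) r 0) * Suc j"
    using marked_forestsD(3,7)[OF _ fV] finite_marked_forests[OF fV]
    by (intro card_Sigma_const) auto
  ultimately show ?thesis using bij_betw_same_card[OF join_unmarked_bij[OF fV k]]
    by (metis mult.commute)
qed

lemma join_marked_edge:
  assumes fV: "finite V" and k: "k \<ge> 2" and mf: "(F, M) \<in> marked_forests V k j (r + k) q"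
    and S: "S \<subseteq> Inl -` M" "card S = k"
  shows "(insert S F, (M - Inl ` S) \<union> {Inr S}) \<in> marked_forests V k (Suc j) r (Suc q)"
    and "S \<notin> F" and "Inr S \<notin> M"
proof -
  note D = marked_forestsD[OF mf fV]
  have SV: "S \<subseteq> V" using S D(11) by auto
  have fS: "finite S" using SV fV finite_subset by blast
  have sep: "\<forall>a\<in>S. \<forall>b\<in>S. conn F a b \<longrightarrow> a = b" using roots_unlinked[OF D(4)] S by blast
  show SF: "S \<notin> F"
  proof
    assume "S \<in> F"
    obtain s1 s2 where "s1 \<in> S" "s2 \<in> S" "s1 \<noteq> s2"
      using S(2) k fS by (metis One_nat_def card_le_Suc0_iff_eq not_less_eq_eq numeral_2_eq_2)
    thus False using sep conn_edge[OF \<open>S \<in> F\<close>] by blast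
  qed
  show SM: "Inr S \<notin> M" using SF D(10) by auto
  note N = reached_marks_roots[OF D(4) S(1)]
  have "marking V (insert S F) ((M - Inl ` S) \<union> {Inr S})"
    using marking_merge[OF D(4) N[symmetric]] by simp
  moreover have "Inl -` ((M - Inl ` S) \<union> {Inr S}) = Inl -` M - S" by auto
  hence "card (Inl -` ((M - Inl ` S) \<union> {Inr S})) = r"
    using card_Diff_subset[OF fS S(1)] D(5) S(2) by simp
  moreover have "Inr -` ((M - Inl ` S) \<union> {Inr S}) = insert S (Inr -` M)" by auto
  hence "card (Inr -` ((M - Inl ` S) \<union> {Inr S})) = Suc q" using SM D(6,9) by simp
  moreover have "\<not> has_cycle (insert S F)" using forest_insert[OF SF] D(2) sep by blast
  moreover have "card (insert S F) = Suc j" using D(3,7) SF by simp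
  moreover have "insert S F \<subseteq> edges_on V k" using D(1) SV S unfolding edges_on_def by auto
  ultimately show "(insert S F, (M - Inl ` S) \<union> {Inr S}) \<in> marked_forests V k (Suc j) r (Suc q)"
    unfolding marked_forests_def by auto
qed

lemma cut_marked_edge:
  assumes fV: "finite V" and mf: "(G, M) \<in> marked_forests V k (Suc j) r (Suc q)"
    and bM: "Inr b \<in> M"
  shows "(G - {b}, (M - {Inr b}) \<union> Inl ` b) \<in> marked_forests V k j (r + k) q"
    and "b \<in> G" and "M \<inter> Inl ` b = {}"
proof -
  note D = marked_forestsD[OF mf fV]
  show bG: "b \<in> G" using marking_Inr[OF D(4) bM] .
  have bV: "b \<subseteq> V" and cb: "card b = k" using edges_onD[OF D(1) bG] by auto
  have fb: "finite b" using bV fV finite_subset by blast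
  show dj: "M \<inter> Inl ` b = {}"
  proof (rule ccontr)
    assume "M \<inter> Inl ` b \<noteq> {}"
    then obtain a where a: "a \<in> b" "Inl a \<in> M" by auto
    have "reaches G a (Inr b)" using a(1) by (auto intro!: bexI[of _ a])
    thus False using marking_uniq[OF D(4), of a "Inl a" "Inr b"] a bV bM by auto
  qed
  have "marking V (G - {b}) ((M - {Inr b}) \<union> Inl ` b)"
    using marking_split_edge[OF D(4) bM D(2) bV] .
  moreover have "Inl -` ((M - {Inr b}) \<union> Inl ` b) = Inl -` M \<union> b" "Inl -` M \<inter> b = {}"
    using dj by auto
  hence "card (Inl -` ((M - {Inr b}) \<union> Inl ` b)) = r + k"
    using card_Un_disjoint[OF D(8) fb] cb D(5) by simp
  moreover have "Inr -` ((M - {Inr b}) \<union> Inl ` b) = Inr -` M - {b}" by auto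
  hence "card (Inr -` ((M - {Inr b}) \<union> Inl ` b)) = q" using D(6,9) bM by simp
  moreover have "\<not> has_cycle (G - {b})" using D(2) has_cycle_mono[of "G - {b}" G] by auto
  moreover have "card (G - {b}) = j" using D(3,7) bG by simp
  ultimately show "(G - {b}, (M - {Inr b}) \<union> Inl ` b) \<in> marked_forests V k j (r + k) q"
    unfolding marked_forests_def using D(1) by auto
qed

definition join_marked :: "(nat set set \<times> mark set) \<times> nat set \<Rightarrow> (nat set set \<times> mark set) \<times> nat set"
  where "join_marked = (\<lambda>((F, M), S). ((insert S F, (M - Inl ` S) \<union> {Inr S}), S))"

definition cut_marked :: "(nat set set \<times> mark set) \<times> nat set \<Rightarrow> (nat set set \<times> mark set) \<times> nat set"
  where "cut_marked = (\<lambda>((G, M), b). ((G - {b}, (M - {Inr b}) \<union> Inl ` b), b))"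

lemma join_marked_bij:
  assumes fV: "finite V" and k: "k \<ge> 2"
  shows "bij_betw join_marked
    (Sigma (marked_forests V k j (r + k) q) (\<lambda>(F, M). {S. S \<subseteq> Inl -` M \<and> card S = k}))
    (Sigma (marked_forests V k (Suc j) r (Suc q)) (\<lambda>(G, M). Inr -` M))"
proof (rule bij_betw_byWitness[where f' = cut_marked])
  let ?A = "Sigma (marked_forests V k j (r + k) q) (\<lambda>(F, M). {S. S \<subseteq> Inl -` M \<and> card S = k})"
  let ?B = "Sigma (marked_forests V k (Suc j) r (Suc q)) (\<lambda>(G, M). Inr -` M)"
  have join_cut: "cut_marked (join_marked a) = a \<and> join_marked a \<in> ?B" if "a \<in> ?A" for a
  proof -
    obtain F M S where a: "a = ((F, M), S)" by (metis prod.collapse)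
    have mf: "(F, M) \<in> marked_forests V k j (r + k) q" and S: "S \<subseteq> Inl -` M" "card S = k"
      using that a by auto
    note J = join_marked_edge[OF fV k mf S]
    have "insert S F - {S} = F" "(M - Inl ` S) \<union> {Inr S} - {Inr S} \<union> Inl ` S = M"
      using J(2,3) S by auto
    thus ?thesis using J(1) unfolding a join_marked_def cut_marked_def by simp
  qed
  show "\<forall>a\<in>?A. cut_marked (join_marked a) = a" using join_cut by blast
  show "join_marked ` ?A \<subseteq> ?B" using join_cut by (intro image_subsetI) blast
  have cut_join: "join_marked (cut_marked b) = b \<and> cut_marked b \<in> ?A" if "b \<in> ?B" for b
  proof -
    obtain G M e where b: "b = ((G, M), e)" by (metis prod.collapse)
    have mf: "(G, M) \<in> marked_forests V k (Suc j) r (Suc q)" and eM: "Inr e \<in> M"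
      using that b by auto
    note C = cut_marked_edge[OF fV mf eM]
    have "insert e (G - {e}) = G" "(M - {Inr e}) \<union> Inl ` e - Inl ` e \<union> {Inr e} = M"
      using C(2,3) eM by auto
    moreover have "card e = k" using edges_onD[OF marked_forestsD(1)[OF mf fV] C(2)] by simp
    ultimately show ?thesis using C(1) unfolding b join_marked_def cut_marked_def by auto
  qed
  show "\<forall>b\<in>?B. join_marked (cut_marked b) = b" using cut_join by blast
  show "cut_marked ` ?B \<subseteq> ?A" using cut_join by (intro image_subsetI) blast
qed

lemma count_marked_edge:
  assumes fV: "finite V" and k: "k \<ge> 2"
  shows "Suc q * card (marked_forests V k (Suc j) r (Suc q)) =
         card (marked_forests V k j (r + k) q) * ((r + k) choose k)"
proof -
  have "card (Sigma (marked_forests V k j (r + k) q) (\<lambda>(F, M). {S. S \<subseteq> Inl -` M \<and> card S = k})) =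
        card (marked_forests V k j (r + k) q) * ((r + k) choose k)"
    using marked_forestsD(5,8)[OF _ fV] finite_marked_forests[OF fV]
    by (intro card_Sigma_const) (auto simp: n_subsets)
  moreover have "card (Sigma (marked_forests V k (Suc j) r (Suc q)) (\<lambda>(G, M). Inr -` M)) =
        card (marked_forests V k (Suc j) r (Suc q)) * Suc q"
    using marked_forestsD(6,9)[OF _ fV] finite_marked_forests[OF fV]
    by (intro card_Sigma_const) auto
  ultimately show ?thesis using bij_betw_same_card[OF join_marked_bij[OF fV k]]
    by (metis mult.commute)
qed

section \<open>The number of marked forests\<close>

definition marked_count :: "nat \<Rightarrow> nat \<Rightarrow> nat \<Rightarrow> nat \<Rightarrow> nat \<Rightarrow> real" where
  "marked_count n k j r q = (if r + q + (k - 1) * j = n \<and> q \<le> j then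
     real n ^ (j - q) * fact (n - 1) * real (r + k * q) /
       (fact (k - 1) ^ (j - q) * fact k ^ q * fact q * fact r * fact (j - q)) else 0)"

lemma marked_count_0: "n \<ge> 1 \<Longrightarrow> marked_count n k 0 r q = (if r = n \<and> q = 0 then 1 else 0)"
proof -
  assume n: "n \<ge> 1"
  have "fact n = real n * (fact (n - 1) :: real)" using n by (cases n) auto
  hence "fact (n - 1) * real n / fact n = (1::real)" using n by simp
  thus ?thesis unfolding marked_count_def by (auto simp: mult.commute)
qed

lemma marked_count_unmarked:
  assumes k: "k \<ge> 2"
  shows "real (Suc j) * marked_count n k (Suc j) r 0 =
    marked_count n k j (r + k - 1) 0 * (real n * real ((r + k - 2) choose (k - 1)))"
proof -
  obtain a where a: "k = Suc a" "a \<ge> 1" using k by (metis Suc_le_D Suc_le_mono one_add_one plus_1_eq_Suc)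
  show ?thesis
  proof (cases "r + (k - 1) * Suc j = n")
    case False
    hence "r + k - 1 + 0 + (k - 1) * j \<noteq> n" using a by auto
    thus ?thesis using False unfolding marked_count_def by auto
  next
    case True
    show ?thesis
    proof (cases r)
      case 0
      thus ?thesis using a unfolding marked_count_def by simp
    next
      case (Suc r')
      have e1: "r + k - 1 = Suc (r' + a)" "r + k - 2 = r' + a" "k - 1 = a" using Suc a by auto
      have ch: "real ((r' + a) choose a) = fact (r' + a) / (fact a * fact r')"
        using binomial_fact[of a "r' + a"] by simp
      have L: "marked_count n k (Suc j) r 0 = real n ^ Suc j * fact (n - 1) * real r /
               (fact a ^ Suc j * fact r * fact (Suc j))"
        unfolding marked_count_def using True a by simp
      have R: "marked_count n k j (r + k - 1) 0 = real n ^ j * fact (n - 1) * real (r + k - 1) /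
               (fact a ^ j * fact (r + k - 1) * fact j)"
        unfolding marked_count_def using True a Suc by simp
      have rearrange: "x * (N * Pn * P * rr / (A * Aj * (rr * fr') * (x * fj))) =
          Pn * P * s / (Aj * (s * fs') * fj) * (N * (fs' / (A * fr')))"
        if "x \<noteq> 0" "A \<noteq> 0" "Aj \<noteq> 0" "rr \<noteq> 0" "fr' \<noteq> 0" "fj \<noteq> 0" "s \<noteq> 0" "fs' \<noteq> 0"
        for x N Pn P rr A Aj fr' fj s fs' :: real
        using that by (simp add: divide_simps ac_simps)
      have f1: "fact r = real r * (fact r' :: real)" using Suc by (simp add: fact_Suc)
      have f2: "fact (Suc j) = real (Suc j) * (fact j :: real)" by (simp add: fact_Suc)
      have f3: "fact (Suc (r' + a)) = real (Suc (r' + a)) * (fact (r' + a) :: real)"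
        by (simp add: fact_Suc)
      show ?thesis
        unfolding L R unfolding e1 ch f1 f2 f3 power_Suc by (rule rearrange) (use Suc in auto)
    qed
  qed
qed

lemma marked_count_marked:
  assumes k: "k \<ge> 2"
  shows "real (Suc q) * marked_count n k (Suc j) r (Suc q) =
    marked_count n k j (r + k) q * real ((r + k) choose k)"
proof -
  have c: "(r + Suc q + (k - 1) * Suc j = n \<and> Suc q \<le> Suc j) \<longleftrightarrow> (r + k + q + (k - 1) * j = n \<and> q \<le> j)"
    using k by (cases k) (auto simp: algebra_simps)
  show ?thesis
  proof (cases "r + k + q + (k - 1) * j = n \<and> q \<le> j")
    case False
    thus ?thesis using c unfolding marked_count_def by auto
  next
    case True
    have ch: "real ((r + k) choose k) = fact (r + k) / (fact k * fact r)"
      using binomial_fact[of k "r + k"] by simp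
    have L: "marked_count n k (Suc j) r (Suc q) = real n ^ (j - q) * fact (n - 1) * real (r + k * Suc q) /
       (fact (k - 1) ^ (j - q) * fact k ^ Suc q * fact (Suc q) * fact r * fact (j - q))"
      unfolding marked_count_def using True c by simp
    have R: "marked_count n k j (r + k) q = real n ^ (j - q) * fact (n - 1) * real (r + k + k * q) /
       (fact (k - 1) ^ (j - q) * fact k ^ q * fact q * fact (r + k) * fact (j - q))"
      unfolding marked_count_def using True by simp
    have e: "r + k * Suc q = r + k + k * q" by simp
    have rearrange: "x * (P * c / (A * (fk * fkq) * (x * fq) * fr * B)) =
        P * c / (A * fkq * fq * frk * B) * (frk / (fk * fr))"
      if "x \<noteq> 0" "A \<noteq> 0" "fk \<noteq> 0" "fkq \<noteq> 0" "fq \<noteq> 0" "fr \<noteq> 0" "B \<noteq> 0" "frk \<noteq> 0"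
      for x P c A fk fkq fq fr B frk :: real
      using that by (simp add: divide_simps ac_simps)
    have fs: "fact (Suc q) = real (Suc q) * (fact q :: real)" by (simp add: fact_Suc)
    show ?thesis unfolding L R ch e fs power_Suc by (rule rearrange) auto
  qed
qed

theorem card_marked_forests:
  assumes fV: "finite V" and n: "card V = n" "n \<ge> 1" and k: "k \<ge> 2"
  shows "real (card (marked_forests V k j r q)) = marked_count n k j r q"
proof (induction q arbitrary: j r)
  case 0
  show ?case
  proof (induction j arbitrary: r)
    case 0
    show ?case using marked_forests_0[OF fV, of k r 0] marked_count_0[OF n(2), of k r 0] n by simp
  next
    case (Suc j)
    have "real (Suc j) * real (card (marked_forests V k (Suc j) r 0)) =
          marked_count n k j (r + k - 1) 0 * (real n * real ((r + k - 2) choose (k - 1)))"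
      using arg_cong[OF count_unmarked_edge[OF fV k, of j r], of real] Suc.IH[of "r + k - 1"] n
      by (simp add: ring_distribs)
    also have "\<dots> = real (Suc j) * marked_count n k (Suc j) r 0"
      using marked_count_unmarked[OF k] by simp
    finally show ?case by simp
  qed
next
  case (Suc q)
  show ?case
  proof (cases j)
    case 0
    show ?thesis
      using marked_forests_0[OF fV, of k r "Suc q"] marked_count_0[OF n(2), of k r "Suc q"] 0 by simp
  next
    case (Suc j')
    have "real (Suc q) * real (card (marked_forests V k (Suc j') r (Suc q))) =
          marked_count n k j' (r + k) q * real ((r + k) choose k)"
      using arg_cong[OF count_marked_edge[OF fV k, of q j' r], of real] Suc.IH[of j' "r + k"]
      by (simp add: ring_distribs)
    also have "\<dots> = real (Suc q) * marked_count n k (Suc j') r (Suc q)"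
      using marked_count_marked[OF k] by simp
    finally show ?thesis using Suc by simp
  qed
qed

section \<open>Components of a forest\<close>

text \<open>If a forest admits a marking by roots only, comparing with the closed formula shows that
  #roots + (k-1) #edges = #vertices.\<close>
lemma root_marking_count:
  assumes fV: "finite V" and k: "k \<ge> 2" and ne: "V \<noteq> {}" and F: "F \<subseteq> edges_on V k"
    and acyc: "\<not> has_cycle F" and mk: "marking V F (Inl ` R)"
  shows "card R + (k - 1) * card F = card V"
proof -
  have "Inl -` (Inl ` R :: mark set) = R" "Inr -` (Inl ` R :: mark set) = {}" by auto
  hence "(F, Inl ` R) \<in> marked_forests V k (card F) (card R) 0"
    unfolding marked_forests_def using F acyc mk by auto
  hence "card (marked_forests V k (card F) (card R) 0) \<noteq> 0"
    using finite_marked_forests[OF fV] by (metis card_0_eq empty_iff)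
  moreover have "card V \<ge> 1" using fV ne by (simp add: Suc_leI card_gt_0_iff)
  ultimately have "marked_count (card V) k (card F) (card R) 0 \<noteq> 0"
    using card_marked_forests[OF fV refl _ k] by (metis of_nat_0_eq_iff)
  thus ?thesis unfolding marked_count_def by (auto split: if_splits)
qed

definition comp_of :: "nat set \<Rightarrow> nat set set \<Rightarrow> nat \<Rightarrow> nat set" where
  "comp_of V F x = {y \<in> V. conn F x y}"

lemma comp_of_self: "x \<in> V \<Longrightarrow> x \<in> comp_of V F x"
  unfolding comp_of_def by simp

lemma comp_of_eq: "y \<in> comp_of V F x \<Longrightarrow> comp_of V F y = comp_of V F x"
  unfolding comp_of_def by (auto intro: conn_trans conn_sym)

definition min_roots :: "nat set \<Rightarrow> nat set set \<Rightarrow> nat set" where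
  "min_roots V F = {x \<in> V. \<forall>y\<in>V. conn F x y \<longrightarrow> x \<le> y}"

lemma min_root_ex:
  assumes fV: "finite V" and x: "x \<in> V"
  shows "\<exists>r\<in>min_roots V F. conn F x r"
proof -
  define r where "r = Min (comp_of V F x)"
  have fc: "finite (comp_of V F x)" using fV unfolding comp_of_def by auto
  have r: "r \<in> comp_of V F x" unfolding r_def using Min_in[OF fc] comp_of_self[OF x] by blast
  have "r \<le> y" if "y \<in> V" "conn F r y" for y
  proof -
    have "y \<in> comp_of V F x" using r that unfolding comp_of_def by (auto intro: conn_trans)
    thus ?thesis unfolding r_def using Min_le[OF fc] by blast
  qed
  thus ?thesis using r unfolding min_roots_def comp_of_def by auto
qed

lemma min_root_uniq:
  assumes "r \<in> min_roots V F" "r' \<in> min_roots V F" "conn F r r'"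
  shows "r = r'"
  using assms conn_sym[OF assms(3)] unfolding min_roots_def by (auto intro: antisym)

lemma marking_min_roots: "finite V \<Longrightarrow> marking V F (Inl ` min_roots V F)"
  unfolding marking_def
proof (intro conjI ballI)
  fix m :: mark assume "m \<in> Inl ` min_roots V F"
  thus "mark_valid V F m" unfolding min_roots_def by auto
next
  fix x assume "finite V" "x \<in> V"
  then obtain r where r: "r \<in> min_roots V F" "conn F x r" using min_root_ex by blast
  show "\<exists>!m. m \<in> Inl ` min_roots V F \<and> reaches F x m"
  proof (rule ex1I[of _ "Inl r"])
    fix m assume "m \<in> Inl ` min_roots V F \<and> reaches F x m"
    then obtain r' where "r' \<in> min_roots V F" "m = Inl r'" "conn F x r'" by auto
    thus "m = Inl r" using min_root_uniq[OF r(1)] r by (metis conn_sym conn_trans)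
  qed (use r in auto)
qed

lemma card_comps:
  assumes fV: "finite V"
  shows "card (comp_of V F ` V) = card (min_roots V F)"
proof -
  have "comp_of V F ` V = comp_of V F ` min_roots V F"
  proof (intro equalityI subsetI)
    fix C assume "C \<in> comp_of V F ` V"
    then obtain x where x: "x \<in> V" "C = comp_of V F x" by blast
    obtain r where r: "r \<in> min_roots V F" "conn F x r" using min_root_ex[OF fV x(1)] by blast
    hence "comp_of V F x = comp_of V F r" unfolding comp_of_def by (meson conn_sym conn_trans)
    thus "C \<in> comp_of V F ` min_roots V F" using x r by blast
  qed (auto simp: min_roots_def)
  moreover have "inj_on (comp_of V F) (min_roots V F)"
  proof
    fix r r' assume r: "r \<in> min_roots V F" "r' \<in> min_roots V F" "comp_of V F r = comp_of V F r'"
    hence "r' \<in> comp_of V F r" using comp_of_self[of r' V F] unfolding min_roots_def by auto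
    thus "r = r'" using min_root_uniq r unfolding comp_of_def by blast
  qed
  ultimately show ?thesis by (simp add: card_image)
qed

theorem forest_components:
  assumes fV: "finite V" and ne: "V \<noteq> {}" and k: "k \<ge> 2" and F: "F \<subseteq> edges_on V k"
    and acyc: "\<not> has_cycle F"
  shows "card (comp_of V F ` V) + (k - 1) * card F = card V"
  using root_marking_count[OF fV k ne F acyc marking_min_roots[OF fV]] card_comps[OF fV] by simp

text \<open>Within a forest, the edges of the component C of x0 span C, so C has
  1 + (k-1) #edges vertices.\<close>
lemma conn_within_comp:
  assumes F: "F \<subseteq> edges_on V k" and c: "conn F x0 y"
  shows "conn {e \<in> F. e \<subseteq> comp_of V F x0} x0 y"
  using c unfolding conn_def
proof (induction rule: rtrancl_induct)
  case (step y z)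
  obtain e where e: "e \<in> F" "y \<in> e" "z \<in> e" using step.hyps(2) unfolding adj_def by auto
  have "e \<subseteq> comp_of V F x0"
    using edges_onD[OF F e(1)] conn_trans[OF step.hyps(1)[folded conn_def] conn_edge[OF e(1,2)]]
    unfolding comp_of_def by blast
  hence "(y, z) \<in> adj {e \<in> F. e \<subseteq> comp_of V F x0}" using e unfolding adj_def by auto
  thus ?case using step.IH by (meson rtrancl.rtrancl_into_rtrancl)
qed simp

lemma card_comp:
  assumes fV: "finite V" and k: "k \<ge> 2" and F: "F \<subseteq> edges_on V k" and acyc: "\<not> has_cycle F"
    and x0: "x0 \<in> V"
  shows "card (comp_of V F x0) = 1 + (k - 1) * card {e \<in> F. e \<subseteq> comp_of V F x0}"
proof -
  define C where "C = comp_of V F x0"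
  define FC where "FC = {e \<in> F. e \<subseteq> C}"
  have fC: "finite C" using fV unfolding C_def comp_of_def by auto
  have x0C: "x0 \<in> C" unfolding C_def using comp_of_self[OF x0] .
  have FC: "FC \<subseteq> edges_on C k" unfolding FC_def edges_on_def using edges_onD[OF F] by auto
  have acycC: "\<not> has_cycle FC" using acyc has_cycle_mono[of FC F] unfolding FC_def by auto
  have "marking C FC (Inl ` {x0})"
    unfolding marking_def
  proof (intro conjI ballI)
    fix x assume "x \<in> C"
    hence "conn FC x x0" using conn_within_comp[OF F] conn_sym unfolding FC_def C_def comp_of_def by auto
    thus "\<exists>!m. m \<in> Inl ` {x0} \<and> reaches FC x m" by auto
  qed (use x0C in auto)
  hence "card {x0} + (k - 1) * card FC = card C"
    using root_marking_count[OF fC k _ FC acycC] x0C by blast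
  thus ?thesis unfolding C_def FC_def by simp
qed

section \<open>Every forest has total marking weight one\<close>

text \<open>Transversals of a disjoint family X i (i in I): sets meeting every X i in exactly one
  element.  They correspond to choice functions via taking the image.\<close>
definition transversals :: "'i set \<Rightarrow> ('i \<Rightarrow> 'a set) \<Rightarrow> 'a set set" where
  "transversals I X = {T. T \<subseteq> \<Union>(X ` I) \<and> (\<forall>i\<in>I. \<exists>!x. x \<in> T \<and> x \<in> X i)}"

lemma transversals_bij:
  assumes disj: "\<And>i j x. i \<in> I \<Longrightarrow> j \<in> I \<Longrightarrow> x \<in> X i \<Longrightarrow> x \<in> X j \<Longrightarrow> i = j"
  shows "bij_betw (\<lambda>g. g ` I) (PiE I X) (transversals I X)"
proof (rule bij_betw_byWitness[where f' = "\<lambda>T. restrict (\<lambda>i. THE x. x \<in> T \<and> x \<in> X i) I"])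
  have image_block: "x \<in> g ` I \<and> x \<in> X i \<longleftrightarrow> x = g i"
    if g: "g \<in> PiE I X" and i: "i \<in> I" for g i x
    using g i disj[OF i, of _ x] by (auto intro: PiE_mem)
  hence pick: "(THE x. x \<in> g ` I \<and> x \<in> X i) = g i" if "g \<in> PiE I X" "i \<in> I" for g i
    using that by simp
  show "\<forall>g\<in>PiE I X. restrict (\<lambda>i. THE x. x \<in> g ` I \<and> x \<in> X i) I = g"
    using pick by (auto simp: PiE_def extensional_def restrict_def fun_eq_iff)
  show "(\<lambda>g. g ` I) ` PiE I X \<subseteq> transversals I X"
  proof (rule image_subsetI)
    fix g assume g: "g \<in> PiE I X"
    have "g ` I \<subseteq> \<Union>(X ` I)" using PiE_mem[OF g] by blast
    thus "g ` I \<in> transversals I X" unfolding transversals_def using image_block[OF g] by auto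
  qed
  have the_in: "(THE x. x \<in> T \<and> x \<in> X i) \<in> T \<and> (THE x. x \<in> T \<and> x \<in> X i) \<in> X i"
    if "T \<in> transversals I X" "i \<in> I" for T i
    using theI'[of "\<lambda>x. x \<in> T \<and> x \<in> X i"] that unfolding transversals_def by auto
  show "(\<lambda>T. restrict (\<lambda>i. THE x. x \<in> T \<and> x \<in> X i) I) ` transversals I X \<subseteq> PiE I X"
    using the_in by auto
  show "\<forall>T\<in>transversals I X. restrict (\<lambda>i. THE x. x \<in> T \<and> x \<in> X i) I ` I = T"
  proof (intro ballI equalityI subsetI)
    fix T x assume T: "T \<in> transversals I X" and x: "x \<in> T"
    then obtain i where i: "i \<in> I" "x \<in> X i" unfolding transversals_def by blast
    have "(THE x. x \<in> T \<and> x \<in> X i) = x"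
      using the1_equality[of "\<lambda>x. x \<in> T \<and> x \<in> X i" x] T i x unfolding transversals_def by auto
    thus "x \<in> restrict (\<lambda>i. THE x. x \<in> T \<and> x \<in> X i) I ` I" using i by force
  qed (use the_in in auto)
qed

lemma sum_transversals:
  fixes w :: "'a \<Rightarrow> 'b :: comm_semiring_1"
  assumes fI: "finite I" and fX: "\<And>i. i \<in> I \<Longrightarrow> finite (X i)"
    and disj: "\<And>i j x. i \<in> I \<Longrightarrow> j \<in> I \<Longrightarrow> x \<in> X i \<Longrightarrow> x \<in> X j \<Longrightarrow> i = j"
  shows "(\<Sum>T\<in>transversals I X. \<Prod>x\<in>T. w x) = (\<Prod>i\<in>I. \<Sum>x\<in>X i. w x)"
proof -
  have "(\<Prod>i\<in>I. \<Sum>x\<in>X i. w x) = (\<Sum>g\<in>PiE I X. \<Prod>i\<in>I. w (g i))"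
    by (rule prod_sum_PiE[OF fI fX])
  also have "\<dots> = (\<Sum>g\<in>PiE I X. \<Prod>x\<in>g ` I. w x)"
  proof (rule sum.cong)
    fix g assume g: "g \<in> PiE I X"
    have "inj_on g I"
    proof (rule inj_onI)
      fix i j assume "i \<in> I" "j \<in> I" "g i = g j"
      thus "i = j" using disj[of i j "g i"] PiE_mem[OF g] by metis
    qed
    thus "(\<Prod>i\<in>I. w (g i)) = (\<Prod>x\<in>g ` I. w x)" by (simp add: prod.reindex)
  qed simp
  also have "\<dots> = (\<Sum>T\<in>transversals I X. \<Prod>x\<in>T. w x)"
    by (rule sum.reindex_bij_betw[OF transversals_bij[OF disj]])
  finally show ?thesis by simp
qed

definition mark_weight :: "nat \<Rightarrow> mark \<Rightarrow> real" where
  "mark_weight k m = (case m of Inl _ \<Rightarrow> 1 | Inr _ \<Rightarrow> 1 - real k)"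

lemma prod_mark_weight:
  "finite M \<Longrightarrow> (\<Prod>m\<in>M. mark_weight k m) = (1 - real k) ^ card (Inr -` M)"
proof (induction M rule: finite_induct)
  case (insert m M)
  have fin: "finite (Inr -` M)" using insert(1) by (rule finite_vimageI) simp
  show ?case
  proof (cases m)
    case (Inl a)
    hence "Inr -` insert m M = Inr -` M" by auto
    thus ?thesis using insert Inl by (simp add: mark_weight_def)
  next
    case (Inr b)
    hence "Inr -` insert m M = insert b (Inr -` M)" "b \<notin> Inr -` M" using insert(2) by auto
    thus ?thesis using insert Inr fin by (simp add: mark_weight_def)
  qed
qed simp

definition comp_marks :: "nat set set \<Rightarrow> nat set \<Rightarrow> mark set" where
  "comp_marks F C = Inl ` C \<union> Inr ` {e \<in> F. e \<subseteq> C}"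

lemma reaches_iff_comp_marks:
  assumes F: "F \<subseteq> edges_on V k" and k: "k \<ge> 1" and x: "x \<in> V" and m: "mark_valid V F m"
  shows "reaches F x m \<longleftrightarrow> m \<in> comp_marks F (comp_of V F x)"
proof (cases m)
  case (Inr b)
  have b: "b \<in> F" "b \<subseteq> V" "b \<noteq> {}" using m Inr edges_onD[OF F] k by fastforce+
  have "(\<exists>y\<in>b. conn F x y) \<longleftrightarrow> b \<subseteq> comp_of V F x"
  proof
    assume "\<exists>y\<in>b. conn F x y"
    then obtain y where "y \<in> b" "conn F x y" by blast
    thus "b \<subseteq> comp_of V F x"
      using b conn_trans[OF _ conn_edge[OF b(1)]] unfolding comp_of_def by blast
  qed (use b in \<open>auto simp: comp_of_def\<close>)
  thus ?thesis using Inr b unfolding comp_marks_def by auto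
qed (use m in \<open>auto simp: comp_marks_def comp_of_def\<close>)

lemma markings_transversals:
  assumes F: "F \<subseteq> edges_on V k" and k: "k \<ge> 1"
  shows "{M. marking V F M} = transversals (comp_of V F ` V) (comp_marks F)"
proof -
  have valid_iff: "mark_valid V F m \<longleftrightarrow> m \<in> \<Union>(comp_marks F ` comp_of V F ` V)" for m
  proof
    assume m: "mark_valid V F m"
    have "\<exists>x\<in>V. reaches F x m"
    proof (cases m)
      case (Inr b)
      then obtain y where "y \<in> b" "b \<subseteq> V" using m edges_onD[OF F] k by fastforce
      hence "reaches F y m" using Inr by (auto intro!: bexI[of _ y])
      thus ?thesis using \<open>y \<in> b\<close> \<open>b \<subseteq> V\<close> by blast
    qed (use m in force)
    thus "m \<in> \<Union>(comp_marks F ` comp_of V F ` V)" using reaches_iff_comp_marks[OF F k _ m] by blast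
  next
    assume "m \<in> \<Union>(comp_marks F ` comp_of V F ` V)"
    thus "mark_valid V F m" unfolding comp_marks_def comp_of_def by auto
  qed
  have "marking V F M \<longleftrightarrow> M \<in> transversals (comp_of V F ` V) (comp_marks F)" for M
  proof (cases "\<forall>m\<in>M. mark_valid V F m")
    case True
    hence "m \<in> M \<and> reaches F x m \<longleftrightarrow> m \<in> M \<and> m \<in> comp_marks F (comp_of V F x)"
      if "x \<in> V" for x m
      using reaches_iff_comp_marks[OF F k that] by blast
    hence "(\<forall>x\<in>V. \<exists>!m. m \<in> M \<and> reaches F x m) \<longleftrightarrow>
        (\<forall>C\<in>comp_of V F ` V. \<exists>!m. m \<in> M \<and> m \<in> comp_marks F C)" by simp
    moreover have "M \<subseteq> \<Union>(comp_marks F ` comp_of V F ` V)" using True valid_iff by blast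
    ultimately show ?thesis using True unfolding marking_def transversals_def mem_Collect_eq by simp
  next
    case False
    hence "\<not> M \<subseteq> \<Union>(comp_marks F ` comp_of V F ` V)" using valid_iff by blast
    thus ?thesis using False unfolding marking_def transversals_def by simp
  qed
  thus ?thesis by blast
qed

text \<open>The marks of one component weigh #vertices + (1-k) #edges = 1 in total.\<close>
lemma comp_marks_weight:
  assumes fV: "finite V" and k: "k \<ge> 2" and F: "F \<subseteq> edges_on V k" and acyc: "\<not> has_cycle F"
    and x0: "x0 \<in> V"
  shows "(\<Sum>m\<in>comp_marks F (comp_of V F x0). mark_weight k m) = 1"
proof -
  define C where "C = comp_of V F x0"
  have fC: "finite C" using fV unfolding C_def comp_of_def by auto
  have fFC: "finite {e \<in> F. e \<subseteq> C}"
    using finite_subset[OF F finite_edges_on[OF fV]] by simp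
  have "(\<Sum>m\<in>comp_marks F C. mark_weight k m) =
        (\<Sum>m\<in>Inl ` C. mark_weight k m) + (\<Sum>m\<in>Inr ` {e \<in> F. e \<subseteq> C}. mark_weight k m)"
    unfolding comp_marks_def using fC fFC by (intro sum.union_disjoint) auto
  also have "\<dots> = real (card C) + real (card {e \<in> F. e \<subseteq> C}) * (1 - real k)"
    by (simp add: sum.reindex mark_weight_def)
  also have "card C = 1 + (k - 1) * card {e \<in> F. e \<subseteq> C}"
    using card_comp[OF fV k F acyc x0] unfolding C_def .
  finally show ?thesis using k unfolding C_def by (simp add: of_nat_diff algebra_simps)
qed

theorem markings_weight:
  assumes fV: "finite V" and k: "k \<ge> 2" and F: "F \<subseteq> edges_on V k" and acyc: "\<not> has_cycle F"
  shows "(\<Sum>M | marking V F M. \<Prod>m\<in>M. mark_weight k m) = 1"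
proof -
  have fF: "finite F" using finite_subset[OF F finite_edges_on[OF fV]] .
  have k1: "k \<ge> 1" using k by simp
  have disj: "C = C'" if CC': "C \<in> comp_of V F ` V" "C' \<in> comp_of V F ` V"
    and m: "m \<in> comp_marks F C" "m \<in> comp_marks F C'" for C C' m
  proof -
    obtain a where "a \<in> C" "a \<in> C'"
    proof (cases m)
      case (Inr b)
      hence "b \<in> F" "b \<subseteq> C" "b \<subseteq> C'" using m unfolding comp_marks_def by auto
      moreover obtain y where "y \<in> b" using edges_onD[OF F \<open>b \<in> F\<close>] k by fastforce
      ultimately show ?thesis using that by blast
    qed (use m that in \<open>auto simp: comp_marks_def\<close>)
    thus ?thesis using CC' comp_of_eq by blast
  qed
  have "(\<Sum>M | marking V F M. \<Prod>m\<in>M. mark_weight k m) =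
        (\<Prod>C\<in>comp_of V F ` V. \<Sum>m\<in>comp_marks F C. mark_weight k m)"
    unfolding markings_transversals[OF F k1] using k fV fF disj
    by (intro sum_transversals) (auto simp: comp_marks_def comp_of_def)
  also have "\<dots> = 1" using comp_marks_weight[OF fV k F acyc] by (auto intro: prod.neutral)
  finally show ?thesis .
qed

section \<open>Counting forests with a given number of edges\<close>

lemma finite_markings:
  assumes "finite V" "finite F"
  shows "finite {M. marking V F M}" and "marking V F M \<Longrightarrow> finite M"
proof -
  have fin: "finite (Inl ` V \<union> Inr ` F)" using assms by simp
  have "{M. marking V F M} \<subseteq> Pow (Inl ` V \<union> Inr ` F)" using marking_subset by blast
  thus "finite {M. marking V F M}" using fin by (simp add: finite_subset)
  show "marking V F M \<Longrightarrow> finite M" using marking_subset fin by (rule finite_subset)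
qed

lemma forests_with_markings:
  assumes fV: "finite V"
  shows "Sigma {F. F \<subseteq> edges_on V k \<and> \<not> has_cycle F \<and> card F = j} (\<lambda>F. {M. marking V F M}) =
    \<Union>((\<lambda>y. marked_forests V k j (snd y) (fst y)) ` ({..j} \<times> {..card V}))"
proof (intro equalityI subsetI)
  fix x assume "x \<in> Sigma {F. F \<subseteq> edges_on V k \<and> \<not> has_cycle F \<and> card F = j} (\<lambda>F. {M. marking V F M})"
  then obtain F M where x: "x = (F, M)" and F: "F \<subseteq> edges_on V k" "\<not> has_cycle F" "card F = j"
    and mk: "marking V F M" by auto
  have "Inl -` M \<subseteq> V" "Inr -` M \<subseteq> F" using marking_Inl[OF mk] marking_Inr[OF mk] by auto
  hence "card (Inl -` M) \<le> card V" "card (Inr -` M) \<le> j"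
    using card_mono[OF fV] card_mono[OF finite_subset[OF F(1) finite_edges_on[OF fV]]] F(3) by auto
  moreover have "x \<in> marked_forests V k j (card (Inl -` M)) (card (Inr -` M))"
    unfolding marked_forests_def x using F mk by auto
  ultimately show "x \<in> \<Union>((\<lambda>y. marked_forests V k j (snd y) (fst y)) ` ({..j} \<times> {..card V}))"
    by (intro UN_I[of "(card (Inr -` M), card (Inl -` M))"]) auto
qed (auto simp: marked_forests_def)

text \<open>Forests on V with j edges, each counted with its total marking weight 1, are counted by
  the weighted numbers of marked forests.\<close>
theorem card_forests_edges:
  assumes fV: "finite V" and n: "card V = n" "n \<ge> 1" and k: "k \<ge> 2"
  shows "real (card {F. F \<subseteq> edges_on V k \<and> \<not> has_cycle F \<and> card F = j}) =
         (\<Sum>q\<le>j. \<Sum>r\<le>n. marked_count n k j r q * (1 - real k) ^ q)"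
proof -
  define Fs where "Fs = {F. F \<subseteq> edges_on V k \<and> \<not> has_cycle F \<and> card F = j}"
  define MF where "MF = (\<lambda>y. marked_forests V k j (snd y) (fst y))"
  have fFs: "finite Fs" unfolding Fs_def using finite_edges_on[OF fV] by simp
  have fF: "F \<in> Fs \<Longrightarrow> finite F" for F
    using finite_edges_on[OF fV] finite_subset unfolding Fs_def by blast
  have "real (card Fs) = (\<Sum>F\<in>Fs. \<Sum>M | marking V F M. \<Prod>m\<in>M. mark_weight k m)"
    using markings_weight[OF fV k] unfolding Fs_def by simp
  also have "\<dots> = (\<Sum>(F, M)\<in>Sigma Fs (\<lambda>F. {M. marking V F M}). \<Prod>m\<in>M. mark_weight k m)"
    using finite_markings(1)[OF fV fF] by (subst sum.Sigma[OF fFs]) auto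
  also have "\<dots> = (\<Sum>(F, M)\<in>Sigma Fs (\<lambda>F. {M. marking V F M}). (1 - real k) ^ card (Inr -` M))"
    using finite_markings(2)[OF fV fF] by (intro sum.cong) (auto simp: prod_mark_weight)
  also have "\<dots> = (\<Sum>y\<in>{..j} \<times> {..n}. \<Sum>(F, M)\<in>MF y. (1 - real k) ^ card (Inr -` M))"
    unfolding Fs_def forests_with_markings[OF fV] n MF_def[symmetric]
    using finite_marked_forests[OF fV] by (intro sum.UNION_disjoint) (auto simp: MF_def marked_forests_def)
  also have "\<dots> = (\<Sum>(q, r)\<in>{..j} \<times> {..n}. marked_count n k j r q * (1 - real k) ^ q)"
  proof (rule sum.cong)
    fix y :: "nat \<times> nat"
    have "(\<Sum>(F, M)\<in>MF y. (1 - real k) ^ card (Inr -` M)) = (\<Sum>x\<in>MF y. (1 - real k) ^ fst y)"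
      by (rule sum.cong) (auto simp: MF_def marked_forests_def)
    also have "\<dots> = marked_count n k j (snd y) (fst y) * (1 - real k) ^ fst y"
      using card_marked_forests[OF fV n k] unfolding MF_def by simp
    finally show "(\<Sum>(F, M)\<in>MF y. (1 - real k) ^ card (Inr -` M)) =
        (case y of (q, r) \<Rightarrow> marked_count n k j r q * (1 - real k) ^ q)"
      by (simp add: case_prod_unfold)
  qed simp
  also have "\<dots> = (\<Sum>q\<le>j. \<Sum>r\<le>n. marked_count n k j r q * (1 - real k) ^ q)"
    by (rule sum.cartesian_product[symmetric])
  finally show ?thesis unfolding Fs_def .
qed

lemma spanning_hyperforests_edges:
  assumes n: "n \<ge> 1" and k: "k \<ge> 2"
  shows "spanning_hyperforests n k p =
    {F. F \<subseteq> edges_on {1..n} k \<and> \<not> has_cycle F \<and> p + (k - 1) * card F = n}"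
proof -
  have "card (components n F) = p \<longleftrightarrow> p + (k - 1) * card F = n"
    if "F \<subseteq> edges_on {1..n} k" "\<not> has_cycle F" for F
  proof -
    have "components n F = comp_of {1..n} F ` {1..n}"
      unfolding components_def comp_of_def conn_def by simp
    moreover have "card (comp_of {1..n} F ` {1..n}) + (k - 1) * card F = n"
      using forest_components[OF _ _ k that] n by simp
    ultimately show ?thesis by auto
  qed
  moreover have "hyperedges n k = edges_on {1..n} k" unfolding hyperedges_def edges_on_def by simp
  ultimately show ?thesis unfolding spanning_hyperforests_def by auto
qed

lemma marked_count_summand:
  assumes n: "n \<ge> 1" and k: "k \<ge> 2" and qp: "q \<le> p" and qm: "q \<le> m" and pm: "p + (k - 1) * m = n"
  shows "fact (n - 1) / fact p * (real n / fact (k - 1)) ^ m *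
           (real (p choose q) * real (p + (k - 1) * q) * (1 / fact (m - q)) *
            ((1 - real k) / (real k * real n)) ^ q)
         = marked_count n k m (p - q) q * (1 - real k) ^ q"
proof -
  have rearrange: "P / pf * ((A * B) / (D * E)) * ((pf / (Q * R)) * c * (1 / S) * (z / (K * B)))
      = A * P * c / (D * (K * E) * Q * R * S) * z"
    if "pf \<noteq> 0" "B \<noteq> 0" "D \<noteq> 0" "E \<noteq> 0" "Q \<noteq> 0" "R \<noteq> 0" "S \<noteq> 0" "K \<noteq> 0"
    for P pf A B D E Q R c S z K :: real
    using that by (simp add: divide_simps ac_simps)
  have mq: "m = (m - q) + q" using qm by simp
  have h1: "(real n / fact (k - 1)) ^ m =
      (real n ^ (m - q) * real n ^ q) / (fact (k - 1) ^ (m - q) * fact (k - 1) ^ q)"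
    by (subst mq) (simp add: power_divide power_add)
  have h2: "((1 - real k) / (real k * real n)) ^ q = (1 - real k) ^ q / (real k ^ q * real n ^ q)"
    by (simp add: power_divide power_mult_distrib)
  have h3: "real (p choose q) = fact p / (fact q * fact (p - q))"
    using binomial_fact[OF qp] by simp
  have fk: "(fact k :: real) = real k * fact (k - 1)" using k by (cases k) auto
  have h4: "(fact k :: real) ^ q = real k ^ q * fact (k - 1) ^ q"
    unfolding fk by (simp add: power_mult_distrib)
  have h5: "p - q + k * q = p + (k - 1) * q" using qp k by (cases k) auto
  have "marked_count n k m (p - q) q = real n ^ (m - q) * fact (n - 1) * real (p + (k - 1) * q) /
      (fact (k - 1) ^ (m - q) * (real k ^ q * fact (k - 1) ^ q) * fact q * fact (p - q) * fact (m - q))"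
    unfolding marked_count_def using qp qm pm h4 h5 by simp
  thus ?thesis unfolding h1 h2 h3 by (rule ssubst, intro rearrange) (use n k in auto)
qed

text \<open>In the weighted count of forests with m edges only r = p - q contributes, which leaves the
  stated sum over q.\<close>
lemma weighted_count_collapse:
  assumes n: "n \<ge> 1" and k: "k \<ge> 2" and pn: "p \<le> n" and pm: "p + (k - 1) * m = n"
  shows "(\<Sum>q\<le>m. \<Sum>r\<le>n. marked_count n k m r q * (1 - real k) ^ q) =
    fact (n - 1) / fact p * (real n / fact (k - 1)) ^ m *
    (\<Sum>q = 0..p. real (p choose q) * real (p + (k - 1) * q) *
       (if q \<le> m then 1 / fact (m - q) else 0) * ((1 - real k) / (real k * real n)) ^ q)"
proof -
  define G where "G = (\<lambda>q. if q \<le> p \<and> q \<le> m then marked_count n k m (p - q) q * (1 - real k) ^ q else 0)"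
  have inner: "(\<Sum>r\<le>n. marked_count n k m r q * (1 - real k) ^ q) = G q" for q
  proof -
    have "marked_count n k m r q = 0" if "r \<noteq> p - q \<or> \<not> (q \<le> p \<and> q \<le> m)" for r
      using that pm unfolding marked_count_def by auto
    hence "(\<Sum>r\<le>n. marked_count n k m r q * (1 - real k) ^ q) =
        (\<Sum>r\<le>n. if r = p - q then G q else 0)"
      unfolding G_def by (intro sum.cong) auto
    moreover have "p - q \<le> n" using pn by simp
    ultimately show ?thesis by simp
  qed
  have "m \<le> (k - 1) * m" using k by (cases "k - 1") auto
  hence "m \<le> n" using pm by linarith
  have "(\<Sum>q\<le>m. \<Sum>r\<le>n. marked_count n k m r q * (1 - real k) ^ q) = (\<Sum>q\<le>m. G q)"
    using inner by simp
  also have "\<dots> = (\<Sum>q\<le>n. G q)"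
    by (rule sum.mono_neutral_left) (use \<open>m \<le> n\<close> in \<open>auto simp: G_def\<close>)
  also have "\<dots> = (\<Sum>q = 0..p. G q)"
    by (rule sum.mono_neutral_right) (use pn in \<open>auto simp: G_def\<close>)
  also have "\<dots> = (\<Sum>q = 0..p. fact (n - 1) / fact p * (real n / fact (k - 1)) ^ m *
      (real (p choose q) * real (p + (k - 1) * q) * (if q \<le> m then 1 / fact (m - q) else 0) *
       ((1 - real k) / (real k * real n)) ^ q))"
  proof (rule sum.cong)
    fix q assume q: "q \<in> {0..p}"
    show "G q = fact (n - 1) / fact p * (real n / fact (k - 1)) ^ m *
      (real (p choose q) * real (p + (k - 1) * q) * (if q \<le> m then 1 / fact (m - q) else 0) *
       ((1 - real k) / (real k * real n)) ^ q)"
    proof (cases "q \<le> m")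
      case True
      have "G q = marked_count n k m (p - q) q * (1 - real k) ^ q" using True q unfolding G_def by simp
      also have "\<dots> = fact (n - 1) / fact p * (real n / fact (k - 1)) ^ m *
           (real (p choose q) * real (p + (k - 1) * q) * (1 / fact (m - q)) *
            ((1 - real k) / (real k * real n)) ^ q)"
        using marked_count_summand[OF n k _ True pm] q by simp
      finally show ?thesis by (simp only: if_P[OF True])
    qed (simp add: G_def)
  qed simp
  finally show ?thesis by (simp add: sum_distrib_left)
qed

theorem mainTheorem10:
  fixes n p k :: nat
  assumes "k \<ge> 2" and "n \<ge> 1" and "1 \<le> p" and "p \<le> n"
  shows "(\<not> (k - 1) dvd (n - p) \<longrightarrow> u n p k = 0) \<and>
         ((k - 1) dvd (n - p) \<longrightarrow>
           (let m = (n - p) div (k - 1) in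
             real (u n p k) =
               fact (n - 1) / fact p * (real n / fact (k - 1)) ^ m *
               (\<Sum>q = 0..p. real (p choose q) * real (p + (k - 1) * q) *
                  (if q \<le> m then 1 / fact (m - q) else 0) *
                  ((1 - real k) / (real k * real n)) ^ q)))"
proof -
  note k = assms(1) and n = assms(2) and pn = assms(4)
  have u: "u n p k = card {F. F \<subseteq> edges_on {1..n} k \<and> \<not> has_cycle F \<and> p + (k - 1) * card F = n}"
    unfolding u_def spanning_hyperforests_edges[OF n k] ..
  show ?thesis
  proof (intro conjI impI)
    assume "\<not> (k - 1) dvd (n - p)"
    hence "p + (k - 1) * j \<noteq> n" for j by auto
    thus "u n p k = 0" unfolding u by simp
  next
    assume dvd: "(k - 1) dvd (n - p)"
    define m where "m = (n - p) div (k - 1)"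
    have pm: "p + (k - 1) * m = n" using dvd pn unfolding m_def by simp
    hence "p + (k - 1) * j = n \<longleftrightarrow> j = m" for j using k by auto
    hence "real (u n p k) = (\<Sum>q\<le>m. \<Sum>r\<le>n. marked_count n k m r q * (1 - real k) ^ q)"
      unfolding u using card_forests_edges[of "{1..n}" n k m] n k by simp
    thus "let m = (n - p) div (k - 1) in real (u n p k) =
        fact (n - 1) / fact p * (real n / fact (k - 1)) ^ m *
        (\<Sum>q = 0..p. real (p choose q) * real (p + (k - 1) * q) *
           (if q \<le> m then 1 / fact (m - q) else 0) * ((1 - real k) / (real k * real n)) ^ q)"
      using weighted_count_collapse[OF n k pn pm] unfolding m_def Let_def by simp
  qed
qed
end
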